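(* Let $K\subseteq\mathbb{R}^n$ be nonempty, compact and convex, and let $F:K\to\mathbb{R}^n$ be continuously differentiable and strongly monotone, i.e. there is $c>0$ with $(x-y)^T(F(x)-F(y))\ge c\|x-y\|^2$ for all $x,y\in K$. Let $x^*$ be the unique solution of the variational inequality $VI(K,F)$. Consider the best response dynamics subject to a dynamics disturbance $\varepsilon(t)$ and a cost disturbance $\Delta(t)$: $$\dot x(t)\in \beta(\tilde\pi(t))-x(t)+\varepsilon(t),\qquad \tilde\pi(t)=F(x(t))+\Delta(t),\qquad \beta(\pi)=\arg\min_{y\in K}y^T\pi,$$ where $\varepsilon$ is admissible and $\Delta:[0,\infty)\to\mathbb{R}^n$ is bounded, differentiable, and has bounded derivative $\dot\Delta$. Then there exist $\omega\in\mathcal{KL}$ and $\gamma_1,\gamma_2\in\mathcal{K}$ such that the solution satisfies, for all $t\ge0$, $$\|x(t)-x^*\|\le \omega(\|x(0)-x^*\|,t)+\gamma_1\big(\max\{\|\varepsilon\|_\infty,\|\Delta\|_\infty\}\big)+\gamma_2(\|\dot\Delta\|_\infty).$$ In particular, if $\varepsilon(t)\to0$, $\Delta(t)\to0$ and $\dot\Delta(t)\to0$ as $t\to\infty$, then $x(t)\to x^*$.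
   Context: A point $x\in K$ solves the variational inequality $VI(K,F)$ if $(y-x)^TF(x)\ge0$ for all $y\in K$. A dynamics disturbance $\varepsilon:[0,\infty)\to\mathbb{R}^n$ is called admissible if it is piecewise continuous, bounded, and the resulting trajectory satisfies $\dot x(t)\in TK(x(t))$ for all $t\ge0$ (where $TK(x)$ is the tangent cone of $K$ at $x$), i.e. the trajectory $x(t)$ remains in $K$; $x(0)\in K$. Solutions are understood in the Carathéodory sense. $\|\cdot\|_\infty$ denotes the supremum over $t\ge0$ of the Euclidean norm. $\mathcal{K}$: continuous strictly increasing functions $[0,\infty)\to[0,\infty)$ vanishing at $0$; $\mathcal{KL}$: functions $\omega(r,t)$ that are of class $\mathcal{K}$ in $r$ for each fixed $t$ and decreasing to $0$ in $t$ for each fixed $r$. *)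

theory Defs
  imports "HOL-Analysis.Analysis"
begin

definition VI_sol :: "'a::euclidean_space set \<Rightarrow> ('a \<Rightarrow> 'a) \<Rightarrow> 'a \<Rightarrow> bool" where
  "VI_sol K F x \<longleftrightarrow> x \<in> K \<and> (\<forall>y\<in>K. (y - x) \<bullet> F x \<ge> 0)"

definition best_resp :: "'a::euclidean_space set \<Rightarrow> 'a \<Rightarrow> 'a set" where
  "best_resp K p = {y \<in> K. \<forall>z\<in>K. y \<bullet> p \<le> z \<bullet> p}"

definition classK :: "(real \<Rightarrow> real) \<Rightarrow> bool" where
  "classK g \<longleftrightarrow> continuous_on {0..} g \<and> strict_mono_on {0..} g \<and> g 0 = 0"

definition classKL :: "(real \<Rightarrow> real \<Rightarrow> real) \<Rightarrow> bool" where
  "classKL w \<longleftrightarrow> (\<forall>t\<ge>0. classK (\<lambda>r. w r t)) \<and>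
     (\<forall>r\<ge>0. (\<forall>s t. 0 \<le> s \<longrightarrow> s \<le> t \<longrightarrow> w r t \<le> w r s) \<and> ((\<lambda>t. w r t) \<longlongrightarrow> 0) at_top)"

definition supnorm :: "(real \<Rightarrow> 'a::real_normed_vector) \<Rightarrow> real" where
  "supnorm f = (SUP t\<in>{0..}. norm (f t))"

definition piecewise_cont :: "(real \<Rightarrow> 'a::real_normed_vector) \<Rightarrow> bool" where
  "piecewise_cont f \<longleftrightarrow> (\<forall>T\<ge>0. \<exists>S. finite S \<and> S \<subseteq> {0..T} \<and>
      (\<forall>t\<in>{0..T} - S. continuous (at t within {0..}) f) \<and>
      (\<forall>s\<in>S. (\<exists>l. (f \<longlongrightarrow> l) (at_right s)) \<and> (0 < s \<longrightarrow> (\<exists>l. (f \<longlongrightarrow> l) (at_left s)))))"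

text \<open>Caratheodory solution on [0,inf) of
  x'(t) in beta(F(x t) + Delta t) - x t + eps t:
  x is absolutely continuous (an indefinite Lebesgue integral of some v) and
  v(s) lies in the right-hand side for almost every s >= 0.\<close>
definition BR_solution ::
  "'a::euclidean_space set \<Rightarrow> ('a \<Rightarrow> 'a) \<Rightarrow> (real \<Rightarrow> 'a) \<Rightarrow> (real \<Rightarrow> 'a) \<Rightarrow> (real \<Rightarrow> 'a) \<Rightarrow> bool" where
  "BR_solution K F eps Dl x \<longleftrightarrow>
     (\<exists>v. (\<forall>t\<ge>0. v absolutely_integrable_on {0..t} \<and> (v has_integral (x t - x 0)) {0..t}) \<and>
          (AE s in lebesgue. s \<ge> 0 \<longrightarrow>
              v s \<in> (\<lambda>y. y - x s + eps s) ` best_resp K (F (x s) + Dl s)))"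

definition admissible :: "'a::euclidean_space set \<Rightarrow> (real \<Rightarrow> 'a) \<Rightarrow> (real \<Rightarrow> 'a) \<Rightarrow> bool" where
  "admissible K eps x \<longleftrightarrow> piecewise_cont eps \<and> bounded (eps ` {0..}) \<and> (\<forall>t\<ge>0. x t \<in> K)"

end

theory Submission
  imports Defs
begin

lemma le_of_eventually_left_descent:
  fixes k :: "real \<Rightarrow> real"
  assumes "a \<le> b" and cont: "continuous_on {a..b} k"
    and descent: "\<And>t. t \<in> {a<..b} \<Longrightarrow> \<forall>\<^sub>F u in at_left t. k t \<le> k u"
  shows "k b \<le> k a"
proof -
  define S where "S = {t \<in> {a..b}. k b \<le> k t}"
  have "closed S"
    unfolding S_def by (rule continuous_on_closed_Collect_le[OF continuous_on_const cont closed_atLeastAtMost])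
  moreover have "S \<noteq> {}" "bdd_below S"
    using \<open>a \<le> b\<close> unfolding S_def by (auto intro: bdd_belowI[where m=a])
  ultimately have T: "Inf S \<in> S"
    by (intro closed_contains_Inf)
  show ?thesis
  proof (cases "Inf S = a")
    case True
    then show ?thesis using T unfolding S_def by auto
  next
    case False
    then have aT: "a < Inf S" "Inf S \<le> b" using T unfolding S_def by auto
    have "\<forall>\<^sub>F u in at_left (Inf S). k (Inf S) \<le> k u \<and> u \<in> {a<..<Inf S}"
      using descent[of "Inf S"] eventually_at_left_real[OF aT(1)] aT
      by (auto intro: eventually_conj)
    then obtain u where u: "k (Inf S) \<le> k u" "u \<in> {a<..<Inf S}"
      using eventually_happens' trivial_limit_at_left_real by blast
    then have "u \<in> S" using T unfolding S_def by auto
    then have "Inf S \<le> u" using \<open>bdd_below S\<close> by (rule cInf_lower)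
    then show ?thesis using u by simp
  qed
qed

lemma lmeasurable_greaterThanAtMost [simp]: "{a<..b::real} \<in> lmeasurable"
  by (simp add: fmeasurable_Diff greaterThanAtMost_eq_atLeastAtMost_diff)

lemma measure_Int_atLeastAtMost_diff:
  fixes G :: "real set"
  assumes "G \<in> sets lebesgue" "a \<le> u" "u \<le> t"
  shows "measure lebesgue (G \<inter> {a..t}) - measure lebesgue (G \<inter> {a..u}) = measure lebesgue (G \<inter> {u<..t})"
proof -
  have lm: "G \<inter> I \<in> lmeasurable" if "I \<in> lmeasurable" for I
    using fmeasurable_Int_fmeasurable[OF that assms(1)] by (simp add: Int_commute)
  have "G \<inter> {a..t} = (G \<inter> {a..u}) \<union> (G \<inter> {u<..t})" "(G \<inter> {a..u}) \<inter> (G \<inter> {u<..t}) = {}"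
    using assms by auto
  moreover have "G \<inter> {a..u} \<in> lmeasurable" "G \<inter> {u<..t} \<in> lmeasurable"
    by (auto intro: lm)
  ultimately show ?thesis by (simp add: measure_Un3)
qed

lemma lipschitz_on_measure_Int_atLeastAtMost:
  fixes G :: "real set"
  assumes "G \<in> sets lebesgue"
  shows "1-lipschitz_on {a..} (\<lambda>t. measure lebesgue (G \<inter> {a..t}))"
proof (rule lipschitz_onI)
  have "\<bar>measure lebesgue (G \<inter> {a..t}) - measure lebesgue (G \<inter> {a..u})\<bar> \<le> t - u"
    if "a \<le> u" "u \<le> t" for u t
  proof -
    have "measure lebesgue (G \<inter> {u<..t}) \<le> measure lebesgue {u<..t}"
      by (rule measure_mono_fmeasurable) (use assms in auto)
    then show ?thesis
      using measure_Int_atLeastAtMost_diff[OF assms that] that by simp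
  qed
  then show "dist (measure lebesgue (G \<inter> {a..u})) (measure lebesgue (G \<inter> {a..t})) \<le> 1 * dist u t"
    if "u \<in> {a..}" "t \<in> {a..}" for u t
    using that by (cases "u \<le> t") (force simp: dist_real_def abs_minus_commute)+
qed simp

lemma negligible_open_cover:
  assumes "negligible N" "e > 0"
  obtains G where "open G" "N \<subseteq> G" "G \<in> lmeasurable" "measure lebesgue G < e"
proof -
  obtain G where G: "open G" "N \<subseteq> G" "G - N \<in> lmeasurable" "emeasure lebesgue (G - N) < ennreal e"
    using sets_lebesgue_outer_open[OF negligible_imp_sets[OF assms(1)] assms(2)] by blast
  have N: "N \<in> lmeasurable" "measure lebesgue N = 0"
    using assms(1) by (auto simp: negligible_iff_measure)
  have GN: "G = (G - N) \<union> N" using G by blast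
  then have "G \<in> lmeasurable" using G(3) N(1) by (metis fmeasurable.Un)
  moreover have "measure lebesgue G = measure lebesgue (G - N)"
    by (subst GN, rule measure_Un_null_set) (use G(3) assms(1) in \<open>auto simp: negligible_iff_null_sets\<close>)
  moreover have "measure lebesgue (G - N) < e"
    using G(3,4) by (simp add: emeasure_eq_measure2 ennreal_less_iff)
  ultimately have "measure lebesgue G < e" by simp
  with G \<open>G \<in> lmeasurable\<close> show ?thesis by (intro that)
qed

lemma lipschitz_le_of_left_Dini_approx:
  fixes g :: "real \<Rightarrow> real"
  assumes "a \<le> b" and lip: "L-lipschitz_on {a..b} g" and "negligible N" and "e > 0"
    and Dini: "\<And>t. t \<in> {a<..b} \<Longrightarrow> t \<notin> N \<Longrightarrow> \<forall>\<^sub>F u in at_left t. g t - g u \<le> e * (t - u)"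
  shows "g b \<le> g a + (L + (b - a)) * e"
proof -
  have L: "L \<ge> 0" using lip by (rule lipschitz_on_nonneg)
  obtain G where G: "open G" "N \<subseteq> G" "G \<in> lmeasurable" "measure lebesgue G < e"
    using negligible_open_cover[OF \<open>negligible N\<close> \<open>e > 0\<close>] .
  have "G \<in> sets lebesgue" using G(3) by (rule fmeasurableD)
  define \<mu> where "\<mu> t = measure lebesgue (G \<inter> {a..t})" for t
  have \<mu>_diff: "\<mu> t - \<mu> u = measure lebesgue (G \<inter> {u<..t})" if "a \<le> u" "u \<le> t" for u t
    unfolding \<mu>_def using \<open>G \<in> sets lebesgue\<close> that by (rule measure_Int_atLeastAtMost_diff)
  \<comment> \<open>On the open cover of the exceptional set, \<open>\<mu>\<close> grows at unit rate, so \<open>L * \<mu>\<close> absorbs the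
     Lipschitz increments of \<open>g\<close> there; elsewhere the Dini bound applies.\<close>
  define k where "k t = g t - L * \<mu> t - e * t" for t
  have "k b \<le> k a"
  proof (rule le_of_eventually_left_descent[OF \<open>a \<le> b\<close>])
    have "1-lipschitz_on {a..b} \<mu>"
      unfolding \<mu>_def using lipschitz_on_measure_Int_atLeastAtMost[OF \<open>G \<in> sets lebesgue\<close>]
      by (rule lipschitz_on_subset) auto
    then show "continuous_on {a..b} k"
      unfolding k_def using lip by (intro continuous_intros lipschitz_on_continuous_on)
  next
    fix t assume t: "t \<in> {a<..b}"
    have near: "\<forall>\<^sub>F u in at_left t. u \<in> {a<..<t}"
      using t by (intro eventually_at_left_real) simp
    show "\<forall>\<^sub>F u in at_left t. k t \<le> k u"
    proof (cases "t \<in> G")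
      case True
      then obtain r where "r > 0" "ball t r \<subseteq> G"
        using G(1) open_contains_ball by blast
      then have "\<forall>\<^sub>F u in at_left t. {u..t} \<subseteq> G"
        using eventually_at_left_real[of "t - r" t]
        by (auto elim!: eventually_mono simp: subset_eq dist_real_def)
      with near show ?thesis
      proof eventually_elim
        case (elim u)
        then have "measure lebesgue (G \<inter> {u<..t}) = t - u"
          by (subst Int_absorb1) auto
        then have "L * (\<mu> t - \<mu> u) = L * (t - u)"
          using \<mu>_diff[of u t] elim by simp
        moreover have "g t - g u \<le> L * (t - u)"
          using lipschitz_onD[OF lip, of t u] t elim by (simp add: dist_real_def)
        moreover have "e * u \<le> e * t" using elim \<open>e > 0\<close> by simp
        ultimately show ?case unfolding k_def by (simp add: algebra_simps)
      qed
    next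
      case False
      then have "t \<notin> N" using G(2) by blast
      from near Dini[OF t this] show ?thesis
      proof eventually_elim
        case (elim u)
        then have "\<mu> t - \<mu> u = measure lebesgue (G \<inter> {u<..t})"
          by (intro \<mu>_diff) auto
        then have "\<mu> u \<le> \<mu> t"
          using measure_nonneg[of lebesgue "G \<inter> {u<..t}"] by linarith
        then have "L * \<mu> u \<le> L * \<mu> t" using L by (rule mult_left_mono)
        then show ?case using elim unfolding k_def by (simp add: algebra_simps)
      qed
    qed
  qed
  moreover have "L * \<mu> b \<le> L * e"
  proof (rule mult_left_mono[OF _ L])
    have "\<mu> b \<le> measure lebesgue G"
      unfolding \<mu>_def by (rule measure_mono_fmeasurable) (use G(3) in auto)
    then show "\<mu> b \<le> e" using G(4) by simp
  qed
  moreover have "0 \<le> L * \<mu> a" using L unfolding \<mu>_def by simp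
  ultimately show ?thesis unfolding k_def by (simp add: algebra_simps)
qed

lemma lipschitz_le_of_left_Dini:
  fixes g :: "real \<Rightarrow> real"
  assumes "a \<le> b" and "L-lipschitz_on {a..b} g" and "negligible N"
    and "\<And>t e. t \<in> {a<..b} \<Longrightarrow> t \<notin> N \<Longrightarrow> e > 0 \<Longrightarrow> \<forall>\<^sub>F u in at_left t. g t - g u \<le> e * (t - u)"
  shows "g b \<le> g a"
proof -
  have "((\<lambda>e. g a + (L + (b - a)) * e) \<longlongrightarrow> g a + (L + (b - a)) * 0) (at_right 0)"
    by (intro tendsto_intros)
  moreover have "\<forall>\<^sub>F e in at_right 0. g b \<le> g a + (L + (b - a)) * e"
    using eventually_at_right_less[of "0::real"]
    by eventually_elim (rule lipschitz_le_of_left_Dini_approx[OF assms(1-3)], use assms(4) in auto)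
  ultimately show ?thesis
    by (intro tendsto_lowerbound) auto
qed

lemma disjoint_Union_measure_le_defect:
  fixes B :: "'i \<Rightarrow> 'a::euclidean_space set"
  assumes "countable C" "disjoint_family_on B C" "A \<in> sets lebesgue" "G - A \<in> lmeasurable" "\<alpha> > 0"
    and B: "\<And>i. i \<in> C \<Longrightarrow> B i \<in> lmeasurable" "\<And>i. i \<in> C \<Longrightarrow> B i \<subseteq> G"
    and defect: "\<And>i. i \<in> C \<Longrightarrow> \<alpha> * measure lebesgue (B i) \<le> measure lebesgue (B i - A)"
  shows "(\<Union>i\<in>C. B i) \<in> lmeasurable" "\<alpha> * measure lebesgue (\<Union>i\<in>C. B i) \<le> measure lebesgue (G - A)"
proof -
  have BA: "B i - A \<in> lmeasurable" if "i \<in> C" for i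
    using B(1)[OF that] \<open>A \<in> sets lebesgue\<close> by (rule fmeasurable_Diff)
  have "ennreal \<alpha> * emeasure lebesgue (\<Union>i\<in>C. B i)
      = (\<integral>\<^sup>+i. ennreal \<alpha> * emeasure lebesgue (B i) \<partial>count_space C)"
    using assms(1,2) B(1) by (simp add: emeasure_UN_countable fmeasurableD nn_integral_cmult)
  also have "\<dots> \<le> (\<integral>\<^sup>+i. emeasure lebesgue (B i - A) \<partial>count_space C)"
  proof (rule nn_integral_mono)
    fix i assume "i \<in> space (count_space C)"
    then have i: "i \<in> C" by simp
    show "ennreal \<alpha> * emeasure lebesgue (B i) \<le> emeasure lebesgue (B i - A)"
      using defect[OF i] \<open>\<alpha> > 0\<close> B(1)[OF i] BA[OF i]
      by (simp add: emeasure_eq_measure2 ennreal_mult[symmetric])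
  qed
  also have "\<dots> = emeasure lebesgue (\<Union>i\<in>C. B i - A)"
    using assms(1,2) BA by (subst emeasure_UN_countable) (auto simp: disjoint_family_on_def)
  also have "\<dots> \<le> emeasure lebesgue (G - A)"
    using B(2) assms(4) by (intro emeasure_mono) auto
  finally have le: "ennreal \<alpha> * emeasure lebesgue (\<Union>i\<in>C. B i) \<le> emeasure lebesgue (G - A)" .
  have U: "(\<Union>i\<in>C. B i) \<in> sets lebesgue"
    using assms(1) B(1) by (intro sets.countable_UN'') auto
  have "emeasure lebesgue (\<Union>i\<in>C. B i) < \<infinity>"
  proof (rule ccontr)
    assume "\<not> emeasure lebesgue (\<Union>i\<in>C. B i) < \<infinity>"
    then have "emeasure lebesgue (\<Union>i\<in>C. B i) = \<infinity>" by (simp add: less_top[symmetric])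
    then have "ennreal \<alpha> * emeasure lebesgue (\<Union>i\<in>C. B i) = \<infinity>"
      using \<open>\<alpha> > 0\<close> by (simp add: ennreal_mult_top)
    then show False using le assms(4) by (simp add: emeasure_eq_measure2 top_unique)
  qed
  then show Ul: "(\<Union>i\<in>C. B i) \<in> lmeasurable"
    using U by (intro fmeasurableI)
  show "\<alpha> * measure lebesgue (\<Union>i\<in>C. B i) \<le> measure lebesgue (G - A)"
  proof -
    have "ennreal (\<alpha> * measure lebesgue (\<Union>i\<in>C. B i)) = ennreal \<alpha> * emeasure lebesgue (\<Union>i\<in>C. B i)"
      using Ul \<open>\<alpha> > 0\<close> by (simp add: emeasure_eq_measure2 ennreal_mult)
    also have "\<dots> \<le> ennreal (measure lebesgue (G - A))"
      using le assms(4) by (simp add: emeasure_eq_measure2)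
    finally show ?thesis by (simp add: ennreal_le_iff)
  qed
qed

lemma Vitali_covering_left_intervals:
  fixes E :: "real set"
  assumes "\<forall>t\<in>E. \<forall>d>0. \<exists>s. 0 < s \<and> s < d \<and> P t s"
  shows "\<exists>C. countable C \<and> (\<forall>i\<in>C. fst i \<in> E \<and> 0 < snd i \<and> P (fst i) (snd i))
    \<and> disjoint_family_on (\<lambda>i. {fst i - snd i..fst i}) C
    \<and> negligible (E - (\<Union>i\<in>C. {fst i - snd i..fst i}))"
proof -
  define I where "I = {i. fst i \<in> E \<and> 0 < snd i \<and> P (fst i) (snd i)}"
  have cball_eq: "cball (fst i - snd i / 2) (snd i / 2) = {fst i - snd i..fst i}" for i :: "real \<times> real"
    by (simp add: cball_eq_atLeastAtMost)
  have "\<exists>i. i \<in> I \<and> t \<in> cball (fst i - snd i / 2) (snd i / 2) \<and> snd i / 2 < d"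
    if t: "t \<in> E" and d: "0 < d" for t d
  proof -
    obtain s where "0 < s" "s < d" "P t s" using assms t d by blast
    then have "(t, s) \<in> I" "t \<in> cball (t - s / 2) (s / 2)" "s / 2 < d"
      using \<open>t \<in> E\<close> unfolding I_def by (auto simp: dist_real_def)
    then show ?thesis by (intro exI[of _ "(t, s)"]) simp
  qed
  moreover have "0 < snd i / 2" if "i \<in> I" for i
    using that unfolding I_def by auto
  ultimately obtain C where "countable C" "C \<subseteq> I"
    "pairwise (\<lambda>i j. disjnt {fst i - snd i..fst i} {fst j - snd j..fst j}) C"
    "negligible (E - (\<Union>i\<in>C. {fst i - snd i..fst i}))"
    using Vitali_covering_theorem_cballs[of I "\<lambda>i. snd i / 2" E "\<lambda>i. fst i - snd i / 2"]
    unfolding cball_eq by blast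
  then show ?thesis
    by (intro exI[of _ C] conjI) (auto simp: I_def disjoint_family_on_def pairwise_def disjnt_def)
qed

lemma negligible_left_density_defect:
  fixes A :: "real set"
  assumes A: "A \<in> sets lebesgue" and "\<alpha> > 0"
  shows "negligible {t\<in>A. \<exists>\<^sub>F s in at_right 0. \<alpha> * s < measure lebesgue ({t - s..t} - A)}"
    (is "negligible ?E")
  unfolding negligible_outer_le
proof (intro allI impI)
  fix \<delta> :: real assume "\<delta> > 0"
  obtain G where G: "open G" "A \<subseteq> G" "G - A \<in> lmeasurable" "emeasure lebesgue (G - A) < ennreal (\<alpha> * \<delta>)"
    using sets_lebesgue_outer_open[OF A, of "\<alpha> * \<delta>"] \<open>\<alpha> > 0\<close> \<open>\<delta> > 0\<close> by auto
  have small: "\<forall>t\<in>?E. \<forall>d>0. \<exists>s. 0 < s \<and> s < d \<and> {t - s..t} \<subseteq> G \<and> \<alpha> * s < measure lebesgue ({t - s..t} - A)"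
  proof (intro ballI allI impI)
    fix t d :: real assume t: "t \<in> ?E" and "0 < d"
    obtain \<rho> where "\<rho> > 0" "ball t \<rho> \<subseteq> G"
      using t G(1,2) open_contains_ball by blast
    have ev: "\<forall>\<^sub>F s in at_right 0. 0 < s \<and> s < min d \<rho>"
      using \<open>0 < d\<close> \<open>\<rho> > 0\<close> unfolding eventually_at_right_field
      by (intro exI[of _ "min d \<rho>"]) auto
    obtain s where s: "0 < s" "s < min d \<rho>" "\<alpha> * s < measure lebesgue ({t - s..t} - A)"
      using frequently_ex[OF frequently_eventually_conj[OF _ ev]] t by auto
    have "{t - s..t} \<subseteq> ball t \<rho>" using s by (auto simp: dist_real_def)
    then show "\<exists>s. 0 < s \<and> s < d \<and> {t - s..t} \<subseteq> G \<and> \<alpha> * s < measure lebesgue ({t - s..t} - A)"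
      using s \<open>ball t \<rho> \<subseteq> G\<close> by auto
  qed
  from Vitali_covering_left_intervals[OF small] obtain C where C: "countable C"
      "\<forall>i\<in>C. fst i \<in> ?E \<and> 0 < snd i \<and>
        {fst i - snd i..fst i} \<subseteq> G \<and> \<alpha> * snd i < measure lebesgue ({fst i - snd i..fst i} - A)"
      "disjoint_family_on (\<lambda>i. {fst i - snd i..fst i}) C"
      "negligible (?E - (\<Union>i\<in>C. {fst i - snd i..fst i}))"
    by (elim exE conjE)
  define U where "U = (\<Union>i\<in>C. {fst i - snd i..fst i})"
  have "{fst i - snd i..fst i} \<subseteq> G"
    "\<alpha> * measure lebesgue {fst i - snd i..fst i} \<le> measure lebesgue ({fst i - snd i..fst i} - A)"
    if "i \<in> C" for i
    using C(2) that by auto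
  from disjoint_Union_measure_le_defect[OF C(1,3) A G(3) \<open>\<alpha> > 0\<close> _ this]
  have U: "U \<in> lmeasurable" "\<alpha> * measure lebesgue U \<le> measure lebesgue (G - A)"
    unfolding U_def by auto
  have "measure lebesgue (G - A) < \<alpha> * \<delta>"
    using G(3,4) by (simp add: emeasure_eq_measure2 ennreal_less_iff)
  with U(2) have "\<alpha> * measure lebesgue U < \<alpha> * \<delta>" by linarith
  then have "measure lebesgue U \<le> \<delta>"
    using \<open>\<alpha> > 0\<close> by (simp add: mult_less_cancel_left_pos)
  moreover have "negligible (?E - U)"
    using C(4) unfolding U_def .
  then have "measure lebesgue (U \<union> (?E - U)) = measure lebesgue U"
    using U(1) by (intro measure_Un_null_set) (auto simp: negligible_iff_null_sets)
  moreover have "U \<union> (?E - U) \<in> lmeasurable"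
    using U(1) \<open>negligible (?E - U)\<close> by (intro fmeasurable.Un) (auto simp: negligible_iff_measure)
  ultimately show "\<exists>T. ?E \<subseteq> T \<and> T \<in> lmeasurable \<and> measure lebesgue T \<le> \<delta>"
    by (intro exI[of _ "U \<union> (?E - U)"]) auto
qed

lemma negligible_non_left_density_points:
  fixes A :: "real set"
  assumes A: "A \<in> sets lebesgue"
  shows "negligible {t\<in>A. \<not> ((\<lambda>s. measure lebesgue ({t - s..t} - A) / s) \<longlongrightarrow> 0) (at_right 0)}"
proof -
  define E where "E n = {t\<in>A. \<exists>\<^sub>F s in at_right 0. (1 / Suc n) * s < measure lebesgue ({t - s..t} - A)}"
    for n :: nat
  have "{t\<in>A. \<not> ((\<lambda>s. measure lebesgue ({t - s..t} - A) / s) \<longlongrightarrow> 0) (at_right 0)} \<subseteq> (\<Union>n. E n)"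
  proof (rule subsetI, rule ccontr)
    fix t assume t: "t \<in> {t\<in>A. \<not> ((\<lambda>s. measure lebesgue ({t - s..t} - A) / s) \<longlongrightarrow> 0) (at_right 0)}"
      and "t \<notin> (\<Union>n. E n)"
    then have "t \<notin> E n" for n by blast
    then have ev: "\<forall>\<^sub>F s in at_right 0. measure lebesgue ({t - s..t} - A) \<le> (1 / Suc n) * s" for n
      using t unfolding E_def by (simp add: not_frequently not_less)
    have "((\<lambda>s. measure lebesgue ({t - s..t} - A) / s) \<longlongrightarrow> 0) (at_right 0)"
    proof (rule tendstoI)
      fix \<epsilon> :: real assume "\<epsilon> > 0"
      then obtain n where n: "inverse (Suc n) < \<epsilon>" using reals_Archimedean by blast
      show "\<forall>\<^sub>F s in at_right 0. dist (measure lebesgue ({t - s..t} - A) / s) 0 < \<epsilon>"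
        using ev[of n] eventually_at_right_less[of "0::real"]
      proof eventually_elim
        case (elim s)
        then have "measure lebesgue ({t - s..t} - A) / s \<le> inverse (Suc n)"
          by (simp add: divide_le_eq inverse_eq_divide)
        then show ?case using n elim by (simp add: dist_real_def)
      qed
    qed
    with t show False by simp
  qed
  moreover have "negligible (E n)" for n
    unfolding E_def using A by (rule negligible_left_density_defect) simp
  then have "negligible (\<Union>n. E n)"
    by (intro negligible_countable_Union) auto
  ultimately show ?thesis using negligible_subset by blast
qed

lemma integral_ge_level_minus_defect:
  fixes f :: "real \<Rightarrow> real"
  assumes f: "f \<in> borel_measurable lebesgue" "\<And>t. \<bar>f t\<bar> \<le> M"
    and "s > 0" and A: "A \<in> sets lebesgue" and level: "\<And>\<tau>. \<tau> \<in> A \<Longrightarrow> q \<le> f \<tau>"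
  shows "q * s - (M + \<bar>q\<bar>) * measure lebesgue ({t - s..t} - A) \<le> integral {t - s..t} f"
proof -
  let ?I = "{t - s..t}"
  have "- A \<inter> ?I \<in> lmeasurable"
    using A by (intro fmeasurable_Int_fmeasurable[of ?I lebesgue "- A", simplified Int_commute])
      (auto simp: Compl_in_sets_lebesgue)
  then have indicator: "(indicat_real (- A) has_integral measure lebesgue (- A \<inter> ?I)) ?I"
    by (metis integrable_integral integrable_on_indicator integral_indicator)
  moreover have "- A \<inter> ?I = ?I - A" by blast
  ultimately have indicator: "(indicat_real (- A) has_integral measure lebesgue (?I - A)) ?I"
    by simp
  have f_int: "f integrable_on ?I"
    by (rule measurable_bounded_by_integrable_imp_integrable[where g="\<lambda>_. M"])
      (use f in \<open>auto simp: measurable_restrict_space1\<close>)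
  have lower: "((\<lambda>\<tau>. q - (M + \<bar>q\<bar>) * indicat_real (- A) \<tau>)
      has_integral q * s - (M + \<bar>q\<bar>) * measure lebesgue (?I - A)) ?I"
    using has_integral_diff[OF has_integral_const_real[of q "t - s" t] has_integral_mult_right[OF indicator]]
      \<open>s > 0\<close> by (simp add: mult.commute)
  have below: "q - (M + \<bar>q\<bar>) * indicat_real (- A) \<tau> \<le> f \<tau>" for \<tau>
    using level[of \<tau>] f(2)[of \<tau>] by (cases "\<tau> \<in> A") (auto simp: abs_le_iff)
  show ?thesis
    using has_integral_le[OF lower integrable_integral[OF f_int]] below by blast
qed

lemma left_density_point_integral_quotient_gt:
  fixes f :: "real \<Rightarrow> real"
  assumes f: "f \<in> borel_measurable lebesgue" "\<And>t. \<bar>f t\<bar> \<le> M"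
    and A: "A \<in> sets lebesgue" and level: "\<And>\<tau>. \<tau> \<in> A \<Longrightarrow> q \<le> f \<tau>"
    and density: "((\<lambda>s. measure lebesgue ({t - s..t} - A) / s) \<longlongrightarrow> 0) (at_right 0)"
    and "y < q"
  shows "\<forall>\<^sub>F s in at_right 0. y < integral {t - s..t} f / s"
proof -
  have "((\<lambda>s. q - (M + \<bar>q\<bar>) * (measure lebesgue ({t - s..t} - A) / s)) \<longlongrightarrow> q - (M + \<bar>q\<bar>) * 0)
      (at_right 0)"
    by (intro tendsto_intros density)
  then have "\<forall>\<^sub>F s in at_right 0. y < q - (M + \<bar>q\<bar>) * (measure lebesgue ({t - s..t} - A) / s)"
    using order_tendstoD(1)[OF _ \<open>y < q\<close>] by simp
  then show ?thesis
    using eventually_at_right_less[of "0::real"]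
  proof eventually_elim
    case (elim s)
    have "q * s - (M + \<bar>q\<bar>) * measure lebesgue ({t - s..t} - A) \<le> integral {t - s..t} f"
      using f elim(2) A level by (rule integral_ge_level_minus_defect)
    then have "(q * s - (M + \<bar>q\<bar>) * measure lebesgue ({t - s..t} - A)) / s \<le> integral {t - s..t} f / s"
      using elim(2) by (intro divide_right_mono) auto
    moreover have "(q * s - (M + \<bar>q\<bar>) * measure lebesgue ({t - s..t} - A)) / s
        = q - (M + \<bar>q\<bar>) * (measure lebesgue ({t - s..t} - A) / s)"
      using elim(2) by (simp add: field_simps)
    ultimately show ?case using elim(1) by linarith
  qed
qed

lemma lebesgue_left_differentiation_real:
  fixes f :: "real \<Rightarrow> real"
  assumes f: "f \<in> borel_measurable lebesgue" "\<And>t. \<bar>f t\<bar> \<le> M"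
  shows "negligible {t. \<not> ((\<lambda>s. integral {t - s..t} f / s) \<longlongrightarrow> f t) (at_right 0)}"
proof -
  define D where "D A = {t\<in>A. \<not> ((\<lambda>s. measure lebesgue ({t - s..t} - A) / s) \<longlongrightarrow> 0) (at_right 0)}" for A
  have meas: "{x. q < f x} \<in> sets lebesgue" "{x. f x < q} \<in> sets lebesgue" for q
    using f(1) borel_measurable_iff_greater[of f lebesgue] borel_measurable_iff_less[of f lebesgue] by auto
  have "negligible (D {x. q < f x} \<union> D {x. f x < q})" for q
    unfolding D_def using meas by (intro negligible_Un negligible_non_left_density_points)
  then have "negligible (\<Union>q\<in>\<rat>. D {x. q < f x} \<union> D {x. f x < q})"
    by (intro negligible_countable_Union) (auto simp: countable_rat)
  moreover have "{t. \<not> ((\<lambda>s. integral {t - s..t} f / s) \<longlongrightarrow> f t) (at_right 0)}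
      \<subseteq> (\<Union>q\<in>\<rat>. D {x. q < f x} \<union> D {x. f x < q})"
  proof (rule subsetI, rule ccontr)
    fix t assume t: "t \<in> {t. \<not> ((\<lambda>s. integral {t - s..t} f / s) \<longlongrightarrow> f t) (at_right 0)}"
      and "t \<notin> (\<Union>q\<in>\<rat>. D {x. q < f x} \<union> D {x. f x < q})"
    then have no_D: "t \<notin> D {x. q < f x}" "t \<notin> D {x. f x < q}" if "q \<in> \<rat>" for q
      using that by blast+
    have dens_gt: "((\<lambda>s. measure lebesgue ({t - s..t} - {x. q < f x}) / s) \<longlongrightarrow> 0) (at_right 0)"
      if "q \<in> \<rat>" "q < f t" for q
      using no_D(1)[OF that(1)] that(2) unfolding D_def by blast
    have dens_lt: "((\<lambda>s. measure lebesgue ({t - s..t} - {x. f x < q}) / s) \<longlongrightarrow> 0) (at_right 0)"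
      if "q \<in> \<rat>" "f t < q" for q
      using no_D(2)[OF that(1)] that(2) unfolding D_def by blast
    have "((\<lambda>s. integral {t - s..t} f / s) \<longlongrightarrow> f t) (at_right 0)"
    proof (rule order_tendstoI)
      fix y assume "y < f t"
      then obtain q where q: "q \<in> \<rat>" "y < q" "q < f t" using Rats_dense_in_real by blast
      show "\<forall>\<^sub>F s in at_right 0. y < integral {t - s..t} f / s"
        using f meas(1) _ dens_gt[OF q(1,3)] q(2) by (rule left_density_point_integral_quotient_gt) simp
    next
      fix y assume "f t < y"
      then obtain q where q: "q \<in> \<rat>" "f t < q" "q < y" using Rats_dense_in_real by blast
      have "\<forall>\<^sub>F s in at_right 0. - y < integral {t - s..t} (\<lambda>x. - f x) / s"
      proof (rule left_density_point_integral_quotient_gt[where q="- q", OF _ _ meas(2) _ dens_lt[OF q(1,2)]])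
        show "(\<lambda>x. - f x) \<in> borel_measurable lebesgue" using f(1) by measurable
        show "\<bar>- f x\<bar> \<le> M" for x using f(2)[of x] by simp
      qed (use q in auto)
      then show "\<forall>\<^sub>F s in at_right 0. integral {t - s..t} f / s < y"
        by simp
    qed
    with t show False by simp
  qed
  ultimately show ?thesis using negligible_subset by blast
qed

lemma lebesgue_left_differentiation:
  fixes w :: "real \<Rightarrow> 'a::euclidean_space"
  assumes integrable: "\<And>T. T \<ge> 0 \<Longrightarrow> w absolutely_integrable_on {0..T}"
    and bounded: "\<And>\<tau>. \<tau> \<ge> 0 \<Longrightarrow> norm (w \<tau>) \<le> M"
  shows "negligible {t. t > 0 \<and> \<not> ((\<lambda>s. integral {t - s..t} w /\<^sub>R s) \<longlongrightarrow> w t) (at_right 0)}"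
proof -
  define g where "g n i \<tau> = indicator {0..real n} \<tau> * (w \<tau> \<bullet> i)" for n :: nat and i :: 'a and \<tau> :: real
  have "(\<lambda>\<tau>. indicator {0..real n} \<tau> *\<^sub>R w \<tau>) \<in> borel_measurable lebesgue" for n
    using integrable[of "real n"] unfolding set_integrable_def by (simp add: borel_measurable_integrable)
  then have "(\<lambda>\<tau>. (indicator {0..real n} \<tau> *\<^sub>R w \<tau>) \<bullet> i) \<in> borel_measurable lebesgue" for n i
    by measurable
  then have g_measurable: "g n i \<in> borel_measurable lebesgue" for n i
    unfolding g_def by simp
  have g_bounded: "\<bar>g n i \<tau>\<bar> \<le> M" if "i \<in> Basis" for n i \<tau>
  proof (cases "\<tau> \<in> {0..real n}")
    case True
    then have "\<bar>w \<tau> \<bullet> i\<bar> \<le> M"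
      using that bounded[of \<tau>] Basis_le_norm[of i "w \<tau>"] by simp
    then show ?thesis using True unfolding g_def by simp
  next
    case False
    have "0 \<le> M" using bounded[of 0] norm_ge_zero[of "w 0"] by linarith
    then show ?thesis using False unfolding g_def by simp
  qed
  define Bad where "Bad n i = {t. \<not> ((\<lambda>s. integral {t - s..t} (g n i) / s) \<longlongrightarrow> g n i t) (at_right 0)}" for n i
  have "negligible (Bad n i)" if "i \<in> Basis" for n i
    unfolding Bad_def using g_measurable g_bounded[OF that] by (rule lebesgue_left_differentiation_real)
  then have "negligible (\<Union>n. \<Union>i\<in>Basis. Bad n i)"
    by (intro negligible_countable_Union) auto
  moreover have "{t. t > 0 \<and> \<not> ((\<lambda>s. integral {t - s..t} w /\<^sub>R s) \<longlongrightarrow> w t) (at_right 0)} \<subseteq> (\<Union>n. \<Union>i\<in>Basis. Bad n i)"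
  proof (rule subsetI, rule ccontr)
    fix t assume t: "t \<in> {t. t > 0 \<and> \<not> ((\<lambda>s. integral {t - s..t} w /\<^sub>R s) \<longlongrightarrow> w t) (at_right 0)}"
      and good: "t \<notin> (\<Union>n. \<Union>i\<in>Basis. Bad n i)"
    obtain n :: nat where n: "t < real n" using reals_Archimedean2 by blast
    have "((\<lambda>s. integral {t - s..t} w /\<^sub>R s) \<longlongrightarrow> w t) (at_right 0)"
    proof (subst tendsto_componentwise_iff, intro ballI)
      fix i :: 'a assume i: "i \<in> Basis"
      have "((\<lambda>s. integral {t - s..t} (g n i) / s) \<longlongrightarrow> g n i t) (at_right 0)"
        using good i unfolding Bad_def by blast
      moreover have "g n i t = w t \<bullet> i" unfolding g_def using t n by simp
      moreover have "\<forall>\<^sub>F s in at_right 0. integral {t - s..t} (g n i) / s = (integral {t - s..t} w /\<^sub>R s) \<bullet> i"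
        unfolding eventually_at_right_field
      proof (intro exI[of _ t] conjI allI impI)
        fix s :: real assume s: "0 < s" "s < t"
        have "integral {t - s..t} (g n i) = integral {t - s..t} (\<lambda>\<tau>. w \<tau> \<bullet> i)"
          using s n by (intro integral_cong) (simp add: g_def)
        also have "\<dots> = integral {t - s..t} w \<bullet> i"
        proof (rule integral_component_eq)
          have "w integrable_on {0..t}"
            using integrable[of t] t by (simp add: set_lebesgue_integral_eq_integral(1))
          then show "w integrable_on {t - s..t}"
            by (rule integrable_subinterval_real) (use s in auto)
        qed
        finally show "integral {t - s..t} (g n i) / s = (integral {t - s..t} w /\<^sub>R s) \<bullet> i"
          by (simp add: divide_inverse mult.commute)
      qed (use t in simp)
      ultimately show "((\<lambda>s. (integral {t - s..t} w /\<^sub>R s) \<bullet> i) \<longlongrightarrow> w t \<bullet> i) (at_right 0)"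
        using tendsto_cong by force
    qed
    with t show False by simp
  qed
  ultimately show ?thesis using negligible_subset by blast
qed

lemma has_vector_derivative_iff_quotient:
  fixes f :: "real \<Rightarrow> 'a::real_normed_vector"
  shows "(f has_vector_derivative f') (at x within S) \<longleftrightarrow>
    ((\<lambda>y. (f y - f x) /\<^sub>R (y - x)) \<longlongrightarrow> f') (at x within S)"
proof -
  have "\<forall>\<^sub>F y in at x within S. norm (f y - f x - (y - x) *\<^sub>R f') / norm (y - x)
      = norm ((f y - f x) /\<^sub>R (y - x) - f')"
    unfolding eventually_at_filter
  proof (intro always_eventually allI impI)
    fix y assume "y \<noteq> x"
    then have "f y - f x - (y - x) *\<^sub>R f' = (y - x) *\<^sub>R ((f y - f x) /\<^sub>R (y - x) - f')"
      by (simp add: scaleR_right_diff_distrib)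
    then show "norm (f y - f x - (y - x) *\<^sub>R f') / norm (y - x) = norm ((f y - f x) /\<^sub>R (y - x) - f')"
      using \<open>y \<noteq> x\<close> by simp
  qed
  then show ?thesis
    unfolding has_vector_derivative_def has_derivative_iff_norm
    by (simp add: bounded_linear_scaleR_left tendsto_cong tendsto_norm_zero_iff LIM_zero_iff)
qed

lemma at_left_eq_filtermap: "at_left t = filtermap (\<lambda>s. t - s) (at_right (0::real))"
  unfolding at_left_minus[of t] at_right_to_0[of "- t"] filtermap_filtermap by simp

lemma exp_weighted_left_Dini:
  fixes V :: "real \<Rightarrow> real"
  assumes Dini: "\<And>e. e > 0 \<Longrightarrow> \<forall>\<^sub>F u in at_left t. V t - V u \<le> (t - u) * (e - V t)"
    and "e > 0"
  shows "\<forall>\<^sub>F u in at_left t. exp t * V t - exp u * V u \<le> e * (t - u)"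
proof -
  define e' where "e' = e / (2 * exp t)"
  have "e' > 0" unfolding e'_def using \<open>e > 0\<close> by simp
  have "((\<lambda>u. (exp u - exp t) / (u - t)) \<longlongrightarrow> exp t) (at_left t)"
    using DERIV_exp[of t] unfolding has_field_derivative_iff by (rule tendsto_within_subset) simp
  then have "((\<lambda>u. ((exp u - exp t) / (u - t) - exp u) * V t + exp u * e') \<longlongrightarrow>
      (exp t - exp t) * V t + exp t * e') (at_left t)"
    by (intro tendsto_intros tendsto_within_subset[OF isCont_exp[unfolded isCont_def]]) auto
  moreover have "(exp t - exp t) * V t + exp t * e' < e"
    unfolding e'_def using \<open>e > 0\<close> by simp
  ultimately have "\<forall>\<^sub>F u in at_left t. ((exp u - exp t) / (u - t) - exp u) * V t + exp u * e' < e"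
    by (rule order_tendstoD(2))
  moreover have "\<forall>\<^sub>F u in at_left t. u \<in> {t - 1<..<t}"
    by (rule eventually_at_left_real) simp
  ultimately show ?thesis using Dini[OF \<open>e' > 0\<close>]
  proof eventually_elim
    case (elim u)
    note elim = elim(3,1,2)
    have "exp t * V t - exp u * V u = (exp t - exp u) * V t + exp u * (V t - V u)"
      by (simp add: algebra_simps)
    also have "\<dots> \<le> (exp t - exp u) * V t + exp u * ((t - u) * (e' - V t))"
      using elim(1) by (intro add_left_mono mult_left_mono) auto
    also have "\<dots> = (t - u) * (((exp u - exp t) / (u - t) - exp u) * V t + exp u * e')"
      using elim(3) by (simp add: field_simps)
    also have "\<dots> \<le> e * (t - u)"
      using elim(2,3) by (simp add: mult.commute)
    finally show ?case .
  qed
qed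

lemma lipschitz_on_mult_real:
  fixes f g :: "'a::metric_space \<Rightarrow> real"
  assumes "L-lipschitz_on X f" "M-lipschitz_on X g"
    and "\<And>x. x \<in> X \<Longrightarrow> \<bar>f x\<bar> \<le> A" "\<And>x. x \<in> X \<Longrightarrow> \<bar>g x\<bar> \<le> B"
    and "A \<ge> 0" "B \<ge> 0"
  shows "(A * M + B * L)-lipschitz_on X (\<lambda>x. f x * g x)"
proof (rule lipschitz_onI)
  fix x y assume xy: "x \<in> X" "y \<in> X"
  have "\<bar>f x * g x - f y * g y\<bar> = \<bar>f x * (g x - g y) + g y * (f x - f y)\<bar>"
    by (simp add: algebra_simps)
  also have "\<dots> \<le> \<bar>f x\<bar> * \<bar>g x - g y\<bar> + \<bar>g y\<bar> * \<bar>f x - f y\<bar>"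
    by (simp add: abs_mult abs_triangle_ineq[THEN order_trans])
  also have "\<dots> \<le> A * (M * dist x y) + B * (L * dist x y)"
    using assms xy lipschitz_onD[OF assms(1) xy] lipschitz_onD[OF assms(2) xy]
    by (intro add_mono mult_mono) (auto simp: dist_real_def)
  finally show "dist (f x * g x) (f y * g y) \<le> (A * M + B * L) * dist x y"
    by (simp add: dist_real_def algebra_simps)
next
  show "0 \<le> A * M + B * L"
    using assms(5,6) lipschitz_on_nonneg[OF assms(1)] lipschitz_on_nonneg[OF assms(2)] by simp
qed

lemma lipschitz_on_exp: "(exp b)-lipschitz_on {a..b} exp"
proof (rule bounded_derivative_imp_lipschitz)
  fix x assume x: "x \<in> {a..b}"
  show "(exp has_derivative (\<lambda>h. exp x * h)) (at x within {a..b})"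
    using DERIV_exp[of x] by (simp add: has_field_derivative_def has_derivative_at_withinI)
  show "onorm (\<lambda>h. exp x * h) \<le> exp b"
    using x by (intro onorm_le) (auto simp: abs_mult intro: mult_right_mono)
qed auto

lemma best_resp_nonempty:
  assumes "K \<noteq> {}" "compact K"
  shows "best_resp K p \<noteq> {}"
proof -
  have "continuous_on K (\<lambda>y. y \<bullet> p)" by (intro continuous_intros)
  then obtain y where "y \<in> K" "\<forall>z\<in>K. y \<bullet> p \<le> z \<bullet> p"
    using continuous_attains_inf[OF assms(2,1)] by blast
  then show ?thesis unfolding best_resp_def by blast
qed

definition br_gap :: "'a::euclidean_space set \<Rightarrow> 'a \<Rightarrow> 'a \<Rightarrow> real" where
  "br_gap K z p = (SUP y\<in>K. (z - y) \<bullet> p)"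

lemma br_gap_eq:
  assumes "y \<in> best_resp K p"
  shows "br_gap K z p = (z - y) \<bullet> p"
  unfolding br_gap_def
  using assms by (intro cSup_eq_maximum) (auto simp: best_resp_def inner_diff_left)

lemma br_gap_ge:
  assumes "best_resp K p \<noteq> {}" "y \<in> K"
  shows "(z - y) \<bullet> p \<le> br_gap K z p"
proof -
  obtain b where b: "b \<in> best_resp K p" using assms(1) by blast
  then show ?thesis
    using assms(2) unfolding br_gap_eq[OF b] by (auto simp: best_resp_def inner_diff_left)
qed

lemma monotone_derivative_nonneg:
  fixes F :: "'a::real_inner \<Rightarrow> 'a"
  assumes "convex K" "y \<in> K" "z \<in> K"
    and deriv: "(F has_derivative F') (at y within K)"
    and mono: "\<And>u v. u \<in> K \<Longrightarrow> v \<in> K \<Longrightarrow> 0 \<le> (u - v) \<bullet> (F u - F v)"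
  shows "0 \<le> (z - y) \<bullet> F' (z - y)"
proof -
  define h where "h = z - y"
  have segment: "y + l *\<^sub>R h \<in> K" if "l \<in> {0..1}" for l
    using convexD_alt[OF assms(1-3), of l] that unfolding h_def by (simp add: algebra_simps)
  have line: "((\<lambda>l. y + l *\<^sub>R h) has_derivative (\<lambda>l. l *\<^sub>R h)) (at 0 within {0..1})"
    by (auto intro!: derivative_eq_intros)
  have "(F has_derivative F') (at ((\<lambda>l. y + l *\<^sub>R h) 0) within (\<lambda>l. y + l *\<^sub>R h) ` {0..1})"
  proof (rule has_derivative_subset[OF _ image_subsetI])
    show "(F has_derivative F') (at ((\<lambda>l. y + l *\<^sub>R h) 0) within K)" using deriv by simp
  qed (use segment in auto)
  from has_derivative_inner_right[OF diff_chain_within[OF line this], of h]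
  have "((\<lambda>l. h \<bullet> F (y + l *\<^sub>R h)) has_derivative (\<lambda>l. h \<bullet> F' (l *\<^sub>R h))) (at 0 within {0..1})"
    by (simp add: o_def)
  moreover have "(\<lambda>l. h \<bullet> F' (l *\<^sub>R h)) = (*) (h \<bullet> F' h)"
    using linear_cmul[OF has_derivative_linear[OF deriv]] by (simp add: fun_eq_iff)
  ultimately have "((\<lambda>l. h \<bullet> F (y + l *\<^sub>R h)) has_field_derivative h \<bullet> F' h) (at 0 within {0..1})"
    by (simp add: has_field_derivative_def)
  then have "((\<lambda>l. (h \<bullet> F (y + l *\<^sub>R h) - h \<bullet> F y) / l) \<longlongrightarrow> h \<bullet> F' h) (at_right 0)"
    by (simp add: has_field_derivative_iff at_within_Icc_at_right)
  moreover have "\<forall>\<^sub>F l in at_right 0. 0 \<le> (h \<bullet> F (y + l *\<^sub>R h) - h \<bullet> F y) / l"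
    using eventually_at_right_real[of 0 1, OF zero_less_one]
  proof eventually_elim
    case (elim l)
    then have "0 \<le> (l *\<^sub>R h) \<bullet> (F (y + l *\<^sub>R h) - F y)"
      using mono[OF segment \<open>y \<in> K\<close>, of l] by simp
    then show ?case
      using elim by (simp add: inner_diff_right zero_le_divide_iff zero_le_mult_iff)
  qed
  ultimately show ?thesis
    unfolding h_def[symmetric] by (intro tendsto_lowerbound) auto
qed

lemma norm_le_supnorm:
  fixes f :: "real \<Rightarrow> 'a::real_normed_vector"
  assumes "bounded (f ` {0..})" "t \<ge> 0"
  shows "norm (f t) \<le> supnorm f"
proof -
  have "bdd_above ((\<lambda>s. norm (f s)) ` {0..})"
    using assms(1) unfolding bounded_iff by (auto intro: bdd_aboveI2)
  then show ?thesis unfolding supnorm_def using assms(2) by (intro cSUP_upper) auto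
qed

lemma BR_solution_best_response_selection:
  assumes "BR_solution K F eps Dl x" "K \<noteq> {}" "compact K"
  obtains b where "\<And>t. t \<ge> 0 \<Longrightarrow> b t \<in> best_resp K (F (x t) + Dl t)"
    and "\<And>T. T \<ge> 0 \<Longrightarrow> (\<lambda>t. b t - x t + eps t) absolutely_integrable_on {0..T}"
    and "\<And>T. T \<ge> 0 \<Longrightarrow> ((\<lambda>t. b t - x t + eps t) has_integral x T - x 0) {0..T}"
proof -
  obtain v where v_int: "\<And>T. T \<ge> 0 \<Longrightarrow> v absolutely_integrable_on {0..T} \<and> (v has_integral x T - x 0) {0..T}"
    and v_ae: "AE s in lebesgue. s \<ge> 0 \<longrightarrow> v s \<in> (\<lambda>y. y - x s + eps s) ` best_resp K (F (x s) + Dl s)"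
    using assms(1) unfolding BR_solution_def by blast
  obtain N where "N \<in> null_sets lebesgue"
    and N: "\<And>s. s \<notin> N \<Longrightarrow> s \<ge> 0 \<Longrightarrow> v s \<in> (\<lambda>y. y - x s + eps s) ` best_resp K (F (x s) + Dl s)"
    using v_ae unfolding eventually_ae_filter by auto
  then have "negligible N" by (simp add: negligible_iff_null_sets)
  define b where "b t = (if t \<in> N then (SOME y. y \<in> best_resp K (F (x t) + Dl t)) else v t + x t - eps t)" for t
  show ?thesis
  proof
    fix t :: real assume "t \<ge> 0"
    show "b t \<in> best_resp K (F (x t) + Dl t)"
    proof (cases "t \<in> N")
      case True
      then show ?thesis
        unfolding b_def using best_resp_nonempty[OF assms(2,3)] by (simp add: some_in_eq)
    next
      case False
      then show ?thesis unfolding b_def using N[OF False \<open>t \<ge> 0\<close>] by auto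
    qed
  next
    have "b t - x t + eps t = v t" if "t \<notin> N" for t
      using that unfolding b_def by simp
    then show "(\<lambda>t. b t - x t + eps t) absolutely_integrable_on {0..T}"
      and "((\<lambda>t. b t - x t + eps t) has_integral x T - x 0) {0..T}" if "T \<ge> 0" for T
      using absolutely_integrable_spike[OF _ \<open>negligible N\<close>] has_integral_spike[OF \<open>negligible N\<close>]
        v_int[OF that] by (metis (no_types, lifting) Diff_iff)+
  qed
qed

lemma classK_sqrt:
  assumes "classK h"
  shows "classK (\<lambda>s. sqrt (h s))"
  unfolding classK_def
proof (intro conjI)
  show "continuous_on {0..} (\<lambda>s. sqrt (h s))"
    using assms unfolding classK_def by (intro continuous_on_real_sqrt) simp
  show "strict_mono_on {0..} (\<lambda>s. sqrt (h s))"
    using assms unfolding classK_def strict_mono_on_def by simp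
  show "sqrt (h 0) = 0"
    using assms unfolding classK_def by simp
qed

lemma classK_quadratic:
  fixes a b :: real
  assumes "a > 0" "b \<ge> 0"
  shows "classK (\<lambda>s. a * s + b * s\<^sup>2)"
  unfolding classK_def
proof (intro conjI strict_mono_onI)
  fix r s :: real assume "r \<in> {0..}" "r < s"
  then have "a * r < a * s" "b * r\<^sup>2 \<le> b * s\<^sup>2"
    using assms by (auto intro: mult_left_mono power_mono)
  then show "a * r + b * r\<^sup>2 < a * s + b * s\<^sup>2" by linarith
qed (auto intro!: continuous_intros)

lemma tendsto_exp_neg_at_top: "((\<lambda>t::real. exp (- t)) \<longlongrightarrow> 0) at_top"
  using filterlim_compose[OF exp_at_bot filterlim_uminus_at_bot_at_top] by simp

locale strongly_monotone_VI =
  fixes K :: "'a::euclidean_space set" and F :: "'a \<Rightarrow> 'a" and F' :: "'a \<Rightarrow> ('a \<Rightarrow>\<^sub>L 'a)"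
    and c :: real and xs :: 'a and R MF LF :: real
  assumes K_nonempty: "K \<noteq> {}" and K_compact: "compact K" and K_convex: "convex K"
    and F_derivative: "\<And>y. y \<in> K \<Longrightarrow> (F has_derivative blinfun_apply (F' y)) (at y)"
    and c_pos: "c > 0"
    and strongly_monotone: "\<And>y z. y \<in> K \<Longrightarrow> z \<in> K \<Longrightarrow> c * (norm (y - z))\<^sup>2 \<le> (y - z) \<bullet> (F y - F z)"
    and equilibrium: "VI_sol K F xs"
    and R_pos: "R > 0" and norm_le_R: "\<And>y. y \<in> K \<Longrightarrow> norm y \<le> R"
    and norm_F_le: "\<And>y. y \<in> K \<Longrightarrow> norm (F y) \<le> MF"
    and norm_F'_le: "\<And>y. y \<in> K \<Longrightarrow> norm (F' y) \<le> LF"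
begin

lemma xs_in_K: "xs \<in> K"
  using equilibrium by (simp add: VI_sol_def)

lemma equilibrium_ineq: "y \<in> K \<Longrightarrow> 0 \<le> (y - xs) \<bullet> F xs"
  using equilibrium by (simp add: VI_sol_def)

lemma norm_diff_le_2R: "y \<in> K \<Longrightarrow> z \<in> K \<Longrightarrow> norm (y - z) \<le> 2 * R"
  using norm_triangle_ineq4[of y z] norm_le_R[of y] norm_le_R[of z] by linarith

lemma MF_nonneg: "0 \<le> MF" and LF_nonneg: "0 \<le> LF"
proof -
  obtain y where "y \<in> K" using K_nonempty by blast
  then show "0 \<le> MF" "0 \<le> LF"
    using norm_F_le[of y] norm_F'_le[of y] norm_ge_zero[of "F y"] norm_ge_zero[of "F' y"] by linarith+
qed

lemma F_lipschitz: "LF-lipschitz_on K F"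
proof (rule bounded_derivative_imp_lipschitz)
  fix y assume "y \<in> K"
  then show "(F has_derivative blinfun_apply (F' y)) (at y within K)"
    by (rule has_derivative_at_withinI[OF F_derivative])
  show "onorm (blinfun_apply (F' y)) \<le> LF"
    using norm_F'_le[OF \<open>y \<in> K\<close>] by (simp add: norm_blinfun.rep_eq)
qed (use K_convex LF_nonneg in auto)

lemma norm_F_diff_le: "y \<in> K \<Longrightarrow> z \<in> K \<Longrightarrow> norm (F y - F z) \<le> LF * norm (y - z)"
  using lipschitz_onD[OF F_lipschitz, of y z] by (simp add: dist_norm)

lemma F'_nonneg:
  assumes "y \<in> K" "z \<in> K"
  shows "0 \<le> (z - y) \<bullet> F' y (z - y)"
proof (rule monotone_derivative_nonneg[OF K_convex assms has_derivative_at_withinI[OF F_derivative[OF assms(1)]]])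
  fix u v assume "u \<in> K" "v \<in> K"
  show "0 \<le> (u - v) \<bullet> (F u - F v)"
    using strongly_monotone[OF \<open>u \<in> K\<close> \<open>v \<in> K\<close>] c_pos
    by (smt (verit) zero_le_mult_iff zero_le_power2)
qed

lemma best_resp_not_empty: "best_resp K p \<noteq> {}"
  using best_resp_nonempty[OF K_nonempty K_compact] .

definition transient :: "real \<Rightarrow> real \<Rightarrow> real" where
  "transient r t = sqrt ((MF + 2 * R * LF + 1) * exp (- t) / c * r)"

definition gain_magnitude :: "real \<Rightarrow> real" where
  "gain_magnitude s = sqrt ((4 * R + 2 * R * LF + MF) / c * s + 1 / c * s\<^sup>2)"

definition gain_rate :: "real \<Rightarrow> real" where
  "gain_rate s = sqrt (2 * R / c * s)"

lemma classKL_transient: "classKL transient"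
  unfolding classKL_def
proof (intro conjI allI impI)
  have A: "MF + 2 * R * LF + 1 > 0"
    using MF_nonneg LF_nonneg R_pos by (simp add: add_nonneg_pos)
  fix t :: real
  show "classK (\<lambda>r. transient r t)"
    unfolding transient_def
    using classK_sqrt[OF classK_quadratic[of "(MF + 2 * R * LF + 1) * exp (- t) / c" 0]] A c_pos
    by simp
  fix r s :: real assume "0 \<le> r" "0 \<le> s" "s \<le> t"
  then show "transient r t \<le> transient r s"
    unfolding transient_def using A c_pos
    by (intro real_sqrt_le_mono mult_right_mono divide_right_mono mult_left_mono) auto
next
  fix r :: real
  have "((\<lambda>t. sqrt ((MF + 2 * R * LF + 1) * exp (- t) / c * r))
      \<longlongrightarrow> sqrt ((MF + 2 * R * LF + 1) * 0 / c * r)) at_top"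
    by (intro tendsto_intros tendsto_exp_neg_at_top) (use c_pos in auto)
  then show "((\<lambda>t. transient r t) \<longlongrightarrow> 0) at_top"
    unfolding transient_def using c_pos by simp
qed

lemma classK_gain_magnitude: "classK gain_magnitude"
  unfolding gain_magnitude_def using MF_nonneg LF_nonneg R_pos c_pos
  by (intro classK_sqrt classK_quadratic) (auto intro!: divide_pos_pos add_pos_nonneg)

lemma classK_gain_rate: "classK gain_rate"
  unfolding gain_rate_def using R_pos c_pos
  using classK_sqrt[OF classK_quadratic[of "2 * R / c" 0]] by simp

end

locale br_trajectory = strongly_monotone_VI +
  fixes x eps Dl Dl' b :: "real \<Rightarrow> 'a::euclidean_space"
  assumes x_in_K: "\<And>t. t \<ge> 0 \<Longrightarrow> x t \<in> K"
    and eps_bounded: "bounded (eps ` {0..})"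
    and Dl_bounded: "bounded (Dl ` {0..})"
    and Dl_derivative: "\<And>t. t \<ge> 0 \<Longrightarrow> (Dl has_vector_derivative Dl' t) (at t within {0..})"
    and Dl'_bounded: "bounded (Dl' ` {0..})"
    and b_best_resp: "\<And>t. t \<ge> 0 \<Longrightarrow> b t \<in> best_resp K (F (x t) + Dl t)"
    and velocity_integrable: "\<And>T. T \<ge> 0 \<Longrightarrow> (\<lambda>t. b t - x t + eps t) absolutely_integrable_on {0..T}"
    and velocity_integral: "\<And>T. T \<ge> 0 \<Longrightarrow> ((\<lambda>t. b t - x t + eps t) has_integral x T - x 0) {0..T}"
begin

definition vel :: "real \<Rightarrow> 'a" where "vel t = b t - x t + eps t"

definition cost :: "real \<Rightarrow> 'a" where "cost t = F (x t) + Dl t"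

definition lyap :: "real \<Rightarrow> real" where "lyap t = br_gap K (x t) (cost t)"

definition perturbation :: "real \<Rightarrow> real" where
  "perturbation t = norm (eps t) * (2 * R * LF + MF + norm (Dl t)) + 2 * R * norm (Dl' t)"

lemma b_in_K: "t \<ge> 0 \<Longrightarrow> b t \<in> K"
  using b_best_resp by (simp add: best_resp_def)

lemma norm_eps_le: "t \<ge> 0 \<Longrightarrow> norm (eps t) \<le> supnorm eps"
  and norm_Dl_le: "t \<ge> 0 \<Longrightarrow> norm (Dl t) \<le> supnorm Dl"
  and norm_Dl'_le: "t \<ge> 0 \<Longrightarrow> norm (Dl' t) \<le> supnorm Dl'"
  using eps_bounded Dl_bounded Dl'_bounded by (auto intro: norm_le_supnorm)

lemma supnorm_nonneg: "0 \<le> supnorm eps" "0 \<le> supnorm Dl" "0 \<le> supnorm Dl'"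
  using norm_eps_le[of 0] norm_Dl_le[of 0] norm_Dl'_le[of 0] by (auto intro: order_trans[OF norm_ge_zero])

lemma norm_vel_le:
  assumes "t \<ge> 0"
  shows "norm (vel t) \<le> 2 * R + supnorm eps"
proof -
  have "norm (vel t) \<le> norm (b t - x t) + norm (eps t)"
    unfolding vel_def by (rule norm_triangle_ineq)
  then show ?thesis
    using norm_diff_le_2R[OF b_in_K[OF assms] x_in_K[OF assms]] norm_eps_le[OF assms] by linarith
qed

lemma x_diff_integral:
  assumes "0 \<le> u" "u \<le> t"
  shows "x t - x u = integral {u..t} vel"
proof -
  have "vel integrable_on {0..t}"
    using velocity_integral[of t] assms unfolding vel_def[abs_def] by (auto intro: has_integral_integrable)
  then have "integral {0..u} vel + integral {u..t} vel = integral {0..t} vel"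
    by (rule Henstock_Kurzweil_Integration.integral_combine[OF assms])
  moreover have "integral {0..s} vel = x s - x 0" if "s \<ge> 0" for s
    using velocity_integral[OF that] unfolding vel_def[abs_def] by (rule integral_unique)
  ultimately show ?thesis using assms by (simp add: algebra_simps)
qed

lemma x_lipschitz: "(2 * R + supnorm eps)-lipschitz_on {0..} x"
proof (rule lipschitz_onI)
  have "norm (x t - x u) \<le> (2 * R + supnorm eps) * (t - u)" if "0 \<le> u" "u \<le> t" for u t
  proof -
    have int: "vel integrable_on {u..t}"
      using velocity_integral[of t] that unfolding vel_def[abs_def]
      by (intro integrable_subinterval_real[OF has_integral_integrable]) auto
    have "0 \<le> 2 * R + supnorm eps" using R_pos supnorm_nonneg by simp
    moreover have "norm (vel \<tau>) \<le> 2 * R + supnorm eps" if "\<tau> \<in> {u..t} - {}" for \<tau>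
      using norm_vel_le that \<open>0 \<le> u\<close> by simp
    ultimately have "norm (integral {u..t} vel) \<le> (2 * R + supnorm eps) * (t - u)"
      using has_integral_bound_real[OF _ finite.emptyI integrable_integral[OF int]] that by simp
    then show ?thesis using x_diff_integral[OF that] by simp
  qed
  note bound = this
  show "dist (x u) (x t) \<le> (2 * R + supnorm eps) * dist u t" if "u \<in> {0..}" "t \<in> {0..}" for u t
  proof (cases "u \<le> t")
    case True
    then show ?thesis using bound[of u t] that by (simp add: dist_norm norm_minus_commute dist_real_def)
  next
    case False
    then show ?thesis using bound[of t u] that by (simp add: dist_norm dist_real_def)
  qed
  show "0 \<le> 2 * R + supnorm eps" using R_pos supnorm_nonneg by simp
qed

lemma x_has_left_derivative:
  obtains N where "negligible N" "\<And>t. t > 0 \<Longrightarrow> t \<notin> N \<Longrightarrow> (x has_vector_derivative vel t) (at_left t)"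
proof
  let ?N = "{t. t > 0 \<and> \<not> ((\<lambda>s. integral {t - s..t} vel /\<^sub>R s) \<longlongrightarrow> vel t) (at_right 0)}"
  show "negligible ?N"
    using velocity_integrable norm_vel_le unfolding vel_def[abs_def]
    by (rule lebesgue_left_differentiation) (simp add: vel_def)
  fix t :: real assume "t > 0" "t \<notin> ?N"
  then have "((\<lambda>s. integral {t - s..t} vel /\<^sub>R s) \<longlongrightarrow> vel t) (at_right 0)" by simp
  moreover have "\<forall>\<^sub>F s in at_right 0. integral {t - s..t} vel /\<^sub>R s = (x (t - s) - x t) /\<^sub>R ((t - s) - t)"
    using eventually_at_right_real[OF \<open>t > 0\<close>]
    by eventually_elim (simp add: x_diff_integral[symmetric] scaleR_minus_right[symmetric] del: scaleR_minus_right)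
  ultimately have "((\<lambda>u. (x u - x t) /\<^sub>R (u - t)) \<longlongrightarrow> vel t) (at_left t)"
    unfolding at_left_eq_filtermap filterlim_filtermap using tendsto_cong by (force simp: o_def)
  then show "(x has_vector_derivative vel t) (at_left t)"
    by (simp add: has_vector_derivative_iff_quotient)
qed

lemma Dl_lipschitz: "(supnorm Dl')-lipschitz_on {0..} Dl"
proof (rule bounded_derivative_imp_lipschitz)
  fix t :: real assume "t \<in> {0..}"
  then show "(Dl has_derivative (\<lambda>h. h *\<^sub>R Dl' t)) (at t within {0..})"
    using Dl_derivative by (simp add: has_vector_derivative_def)
  show "onorm (\<lambda>h. h *\<^sub>R Dl' t) \<le> supnorm Dl'"
    using norm_Dl'_le[of t] \<open>t \<in> {0..}\<close>
    by (intro onorm_le) (simp add: mult.commute[of "supnorm Dl'"] mult_left_mono)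
qed (use supnorm_nonneg in auto)

lemma cost_lipschitz: "(LF * (2 * R + supnorm eps) + supnorm Dl')-lipschitz_on {0..} cost"
proof -
  have "LF-lipschitz_on (x ` {0..}) F"
    using F_lipschitz by (rule lipschitz_on_subset) (auto intro: x_in_K)
  then have "(LF * (2 * R + supnorm eps))-lipschitz_on {0..} (\<lambda>t. F (x t))"
    using lipschitz_on_compose[OF x_lipschitz] by (simp add: o_def)
  then show ?thesis
    unfolding cost_def[abs_def] by (intro lipschitz_on_add Dl_lipschitz)
qed

lemma norm_cost_le: "t \<ge> 0 \<Longrightarrow> norm (cost t) \<le> MF + norm (Dl t)"
  using norm_triangle_ineq[of "F (x t)" "Dl t"] norm_F_le[OF x_in_K] unfolding cost_def by force

lemma cost_has_left_derivative:
  assumes "t > 0" and x': "(x has_vector_derivative v) (at_left t)"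
  shows "(cost has_vector_derivative F' (x t) v + Dl' t) (at_left t)"
proof -
  have "(F has_derivative F' (x t)) (at (x t) within x ` {..<t})"
    using F_derivative[OF x_in_K] \<open>t > 0\<close> by (auto intro: has_derivative_at_withinI)
  from diff_chain_within[OF x'[unfolded has_vector_derivative_def] this]
  have "((\<lambda>u. F (x u)) has_vector_derivative F' (x t) v) (at_left t)"
    by (simp add: has_vector_derivative_def o_def blinfun.scaleR_right)
  moreover have "(Dl has_vector_derivative Dl' t) (at_left t)"
    using has_vector_derivative_within_subset[OF Dl_derivative, of t "{0..t}"] \<open>t > 0\<close>
    by (simp add: at_within_Icc_at_left)
  ultimately show ?thesis
    unfolding cost_def[abs_def] by (rule has_vector_derivative_add)
qed

lemma lyap_eq: "t \<ge> 0 \<Longrightarrow> lyap t = (x t - b t) \<bullet> cost t"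
  unfolding lyap_def cost_def using b_best_resp by (rule br_gap_eq)

lemma lyap_ge: "y \<in> K \<Longrightarrow> (x t - y) \<bullet> cost t \<le> lyap t"
  unfolding lyap_def using best_resp_not_empty by (rule br_gap_ge)

lemma lyap_nonneg: "t \<ge> 0 \<Longrightarrow> 0 \<le> lyap t"
  using lyap_ge[OF x_in_K, of t t] by simp

lemma lyap_le: "t \<ge> 0 \<Longrightarrow> lyap t \<le> 2 * R * (MF + norm (Dl t))"
  using norm_cauchy_schwarz[of "x t - b t" "cost t"] norm_diff_le_2R[OF x_in_K b_in_K] norm_cost_le R_pos
  unfolding lyap_eq by (smt (verit) mult_mono norm_ge_zero)

lemma lyap_diff_le:
  "t \<ge> 0 \<Longrightarrow> lyap t - lyap u \<le> (x t - x u) \<bullet> cost u + (x t - b t) \<bullet> (cost t - cost u)"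
  using lyap_ge[OF b_in_K, of t u] lyap_eq[of t] by (simp add: algebra_simps inner_diff_left inner_diff_right)

lemma lyap_lipschitz: obtains L where "L-lipschitz_on {0..} lyap"
proof -
  define Lx where "Lx = 2 * R + supnorm eps"
  define Lc where "Lc = LF * Lx + supnorm Dl'"
  define L where "L = Lx * (MF + supnorm Dl) + 2 * R * Lc"
  have "0 \<le> Lx" "0 \<le> Lc"
    using lipschitz_on_nonneg[OF x_lipschitz] lipschitz_on_nonneg[OF cost_lipschitz]
    unfolding Lx_def Lc_def by auto
  have one_side: "lyap t - lyap u \<le> L * \<bar>t - u\<bar>" if "t \<ge> 0" "u \<ge> 0" for t u
  proof -
    have "(x t - x u) \<bullet> cost u \<le> norm (x t - x u) * norm (cost u)"
      by (rule norm_cauchy_schwarz)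
    also have "\<dots> \<le> (Lx * \<bar>t - u\<bar>) * (MF + supnorm Dl)"
      using lipschitz_onD[OF x_lipschitz, of t u] norm_cost_le[of u] norm_Dl_le[of u] that \<open>0 \<le> Lx\<close>
      by (intro mult_mono) (auto simp: Lx_def dist_norm dist_real_def)
    finally have x_part: "(x t - x u) \<bullet> cost u \<le> Lx * (MF + supnorm Dl) * \<bar>t - u\<bar>"
      by (simp add: algebra_simps)
    have "(x t - b t) \<bullet> (cost t - cost u) \<le> norm (x t - b t) * norm (cost t - cost u)"
      by (rule norm_cauchy_schwarz)
    also have "\<dots> \<le> (2 * R) * (Lc * \<bar>t - u\<bar>)"
      using norm_diff_le_2R[OF x_in_K b_in_K] lipschitz_onD[OF cost_lipschitz, of t u] that R_pos
      by (intro mult_mono) (auto simp: Lc_def Lx_def dist_norm dist_real_def)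
    finally show ?thesis
      using lyap_diff_le[OF that(1), of u] x_part unfolding L_def by (simp add: algebra_simps)
  qed
  have "L-lipschitz_on {0..} lyap"
  proof (rule lipschitz_onI)
    fix t u :: real assume "t \<in> {0..}" "u \<in> {0..}"
    then show "dist (lyap t) (lyap u) \<le> L * dist t u"
      using one_side[of t u] one_side[of u t] by (simp add: dist_real_def abs_minus_commute)
  next
    show "0 \<le> L"
      unfolding L_def using \<open>0 \<le> Lx\<close> \<open>0 \<le> Lc\<close> MF_nonneg supnorm_nonneg R_pos by simp
  qed
  then show ?thesis by (rule that)
qed

lemma lyap_derivative_bound:
  assumes "t \<ge> 0"
  shows "vel t \<bullet> cost t + (x t - b t) \<bullet> (F' (x t) (vel t) + Dl' t) \<le> perturbation t - lyap t"
proof -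
  have xK: "x t \<in> K" and bK: "b t \<in> K" using assms by (auto intro: x_in_K b_in_K)
  have "vel t \<bullet> cost t + (x t - b t) \<bullet> (F' (x t) (vel t) + Dl' t)
      = - lyap t + eps t \<bullet> cost t - (b t - x t) \<bullet> F' (x t) (b t - x t)
        + (x t - b t) \<bullet> F' (x t) (eps t) + (x t - b t) \<bullet> Dl' t"
    unfolding lyap_eq[OF assms] vel_def
    by (simp add: blinfun.add_right blinfun.diff_right inner_add_left inner_add_right
        inner_diff_left inner_diff_right algebra_simps)
  moreover have "eps t \<bullet> cost t \<le> norm (eps t) * (MF + norm (Dl t))"
    using norm_cauchy_schwarz[of "eps t" "cost t"] norm_cost_le[OF assms]
    by (smt (verit) mult_left_mono norm_ge_zero)
  moreover have "0 \<le> (b t - x t) \<bullet> F' (x t) (b t - x t)"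
    using F'_nonneg[OF xK bK] .
  moreover have "(x t - b t) \<bullet> F' (x t) (eps t) \<le> 2 * R * (LF * norm (eps t))"
  proof -
    have "norm (F' (x t) (eps t)) \<le> LF * norm (eps t)"
      using norm_blinfun[of "F' (x t)" "eps t"] norm_F'_le[OF xK] by (smt (verit) mult_right_mono norm_ge_zero)
    then show ?thesis
      using norm_cauchy_schwarz[of "x t - b t" "F' (x t) (eps t)"] norm_diff_le_2R[OF xK bK]
      by (smt (verit) mult_mono norm_ge_zero)
  qed
  moreover have "(x t - b t) \<bullet> Dl' t \<le> 2 * R * norm (Dl' t)"
    using norm_cauchy_schwarz[of "x t - b t" "Dl' t"] norm_diff_le_2R[OF xK bK]
    by (smt (verit) mult_right_mono norm_ge_zero)
  ultimately show ?thesis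
    unfolding perturbation_def by (simp add: algebra_simps)
qed

lemma lyap_left_Dini:
  assumes "t > 0" and x': "(x has_vector_derivative vel t) (at_left t)" and "e > 0"
  shows "\<forall>\<^sub>F u in at_left t. lyap t - lyap u \<le> (t - u) * (perturbation t - lyap t + e)"
proof -
  have left_quotient: "((\<lambda>u. (f t - f u) /\<^sub>R (t - u)) \<longlongrightarrow> f') (at_left t)"
    if "(f has_vector_derivative f') (at_left t)" for f :: "real \<Rightarrow> 'a" and f'
  proof -
    have "(f u - f t) /\<^sub>R (u - t) = (f t - f u) /\<^sub>R (t - u)" for u
      by (metis minus_diff_eq scaleR_minus_left scaleR_minus_right inverse_minus_eq minus_minus)
    then show ?thesis using that by (simp add: has_vector_derivative_iff_quotient)
  qed
  have cost': "(cost has_vector_derivative F' (x t) (vel t) + Dl' t) (at_left t)"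
    using \<open>t > 0\<close> x' by (rule cost_has_left_derivative)
  then have "(cost \<longlongrightarrow> cost t) (at_left t)"
    using has_vector_derivative_continuous continuous_within by blast
  then have "((\<lambda>u. ((x t - x u) /\<^sub>R (t - u)) \<bullet> cost u + (x t - b t) \<bullet> ((cost t - cost u) /\<^sub>R (t - u)))
      \<longlongrightarrow> vel t \<bullet> cost t + (x t - b t) \<bullet> (F' (x t) (vel t) + Dl' t)) (at_left t)"
    by (intro tendsto_intros left_quotient x' cost')
  moreover have "vel t \<bullet> cost t + (x t - b t) \<bullet> (F' (x t) (vel t) + Dl' t) < perturbation t - lyap t + e"
    using lyap_derivative_bound[of t] \<open>t > 0\<close> \<open>e > 0\<close> by simp
  ultimately have "\<forall>\<^sub>F u in at_left t.
      ((x t - x u) /\<^sub>R (t - u)) \<bullet> cost u + (x t - b t) \<bullet> ((cost t - cost u) /\<^sub>R (t - u))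
        < perturbation t - lyap t + e"
    by (rule order_tendstoD(2))
  moreover have "\<forall>\<^sub>F u in at_left t. u \<in> {0<..<t}"
    using \<open>t > 0\<close> by (rule eventually_at_left_real)
  ultimately show ?thesis
  proof eventually_elim
    case (elim u)
    have "((x t - x u) /\<^sub>R (t - u)) \<bullet> cost u + (x t - b t) \<bullet> ((cost t - cost u) /\<^sub>R (t - u))
        = ((x t - x u) \<bullet> cost u + (x t - b t) \<bullet> (cost t - cost u)) / (t - u)"
      by (simp add: divide_inverse algebra_simps)
    with elim have "(x t - x u) \<bullet> cost u + (x t - b t) \<bullet> (cost t - cost u)
        \<le> (t - u) * (perturbation t - lyap t + e)"
      by (simp add: pos_divide_less_eq mult.commute)
    then show ?case
      using lyap_diff_le[of t u] \<open>t > 0\<close> by simp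
  qed
qed

lemma exp_weighted_lyap_lipschitz:
  assumes "0 \<le> a"
  obtains M where "M-lipschitz_on {a..t} (\<lambda>\<tau>. exp \<tau> * (lyap \<tau> - Q))"
proof -
  obtain L where L: "L-lipschitz_on {0..} lyap"
    by (rule lyap_lipschitz)
  define B where "B = 2 * R * (MF + supnorm Dl) + \<bar>Q\<bar>"
  have "\<bar>lyap \<tau> - Q\<bar> \<le> B" if "\<tau> \<in> {a..t}" for \<tau>
  proof -
    have "\<tau> \<ge> 0" using that \<open>0 \<le> a\<close> by simp
    have "2 * R * (MF + norm (Dl \<tau>)) \<le> 2 * R * (MF + supnorm Dl)"
      using norm_Dl_le[OF \<open>\<tau> \<ge> 0\<close>] R_pos by (intro mult_left_mono) auto
    then show ?thesis
      using lyap_le[OF \<open>\<tau> \<ge> 0\<close>] lyap_nonneg[OF \<open>\<tau> \<ge> 0\<close>] unfolding B_def by linarith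
  qed
  moreover have "(L + 0)-lipschitz_on {a..t} (\<lambda>\<tau>. lyap \<tau> - Q)"
    using lipschitz_on_subset[OF L] \<open>0 \<le> a\<close> by (intro lipschitz_on_diff lipschitz_on_constant) auto
  moreover have "0 \<le> B"
    unfolding B_def using R_pos MF_nonneg supnorm_nonneg by simp
  ultimately have "(exp t * (L + 0) + B * exp t)-lipschitz_on {a..t} (\<lambda>\<tau>. exp \<tau> * (lyap \<tau> - Q))"
    by (intro lipschitz_on_mult_real lipschitz_on_exp) auto
  then show ?thesis by (rule that)
qed

lemma exp_weighted_lyap_left_Dini:
  assumes "\<tau> > 0" "(x has_vector_derivative vel \<tau>) (at_left \<tau>)" "perturbation \<tau> \<le> Q" "e > 0"
  shows "\<forall>\<^sub>F u in at_left \<tau>. exp \<tau> * (lyap \<tau> - Q) - exp u * (lyap u - Q) \<le> e * (\<tau> - u)"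
proof (rule exp_weighted_left_Dini[OF _ \<open>e > 0\<close>])
  fix e' :: real assume "e' > 0"
  from lyap_left_Dini[OF assms(1,2) this] eventually_at_left_real[OF \<open>\<tau> > 0\<close>]
  show "\<forall>\<^sub>F u in at_left \<tau>. lyap \<tau> - Q - (lyap u - Q) \<le> (\<tau> - u) * (e' - (lyap \<tau> - Q))"
  proof eventually_elim
    case (elim u)
    then have "(\<tau> - u) * (perturbation \<tau> - lyap \<tau> + e') \<le> (\<tau> - u) * (e' - (lyap \<tau> - Q))"
      using assms(3) by (intro mult_left_mono) auto
    then show ?case using elim by linarith
  qed
qed

lemma lyap_decay:
  assumes "0 \<le> a" "a \<le> t" "0 \<le> Q" and bound: "\<And>\<tau>. \<tau> \<in> {a<..t} \<Longrightarrow> perturbation \<tau> \<le> Q"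
  shows "lyap t \<le> exp (- (t - a)) * lyap a + Q"
proof -
  obtain N where N: "negligible N" "\<And>\<tau>. \<tau> > 0 \<Longrightarrow> \<tau> \<notin> N \<Longrightarrow> (x has_vector_derivative vel \<tau>) (at_left \<tau>)"
    using x_has_left_derivative by blast
  obtain M where "M-lipschitz_on {a..t} (\<lambda>\<tau>. exp \<tau> * (lyap \<tau> - Q))"
    using exp_weighted_lyap_lipschitz[OF \<open>0 \<le> a\<close>] by blast
  then have "exp t * (lyap t - Q) \<le> exp a * (lyap a - Q)"
  proof (rule lipschitz_le_of_left_Dini[OF \<open>a \<le> t\<close> _ \<open>negligible N\<close>])
    fix \<tau> e :: real assume \<tau>: "\<tau> \<in> {a<..t}" "\<tau> \<notin> N" and "e > 0"
    then have "\<tau> > 0" using \<open>0 \<le> a\<close> by simp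
    then show "\<forall>\<^sub>F u in at_left \<tau>. exp \<tau> * (lyap \<tau> - Q) - exp u * (lyap u - Q) \<le> e * (\<tau> - u)"
      using N(2)[OF \<open>\<tau> > 0\<close> \<tau>(2)] bound[OF \<tau>(1)] \<open>e > 0\<close> by (rule exp_weighted_lyap_left_Dini)
  qed
  then have "lyap t - Q \<le> exp (- (t - a)) * (lyap a - Q)"
    by (simp add: exp_diff exp_minus field_simps)
  then show ?thesis
    using \<open>0 \<le> Q\<close> by (smt (verit) exp_ge_zero mult_nonneg_nonneg right_diff_distrib)
qed

lemma dist_sq_le_lyap:
  assumes "t \<ge> 0"
  shows "c * (norm (x t - xs))\<^sup>2 \<le> lyap t + 2 * R * norm (Dl t)"
proof -
  have xK: "x t \<in> K" using assms by (rule x_in_K)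
  have "(x t - xs) \<bullet> cost t = (x t - xs) \<bullet> (F (x t) - F xs) + (x t - xs) \<bullet> F xs + (x t - xs) \<bullet> Dl t"
    unfolding cost_def by (simp add: inner_diff_right inner_add_right)
  moreover have "- (2 * R * norm (Dl t)) \<le> (x t - xs) \<bullet> Dl t"
    using Cauchy_Schwarz_ineq2[of "x t - xs" "Dl t"] norm_diff_le_2R[OF xK xs_in_K]
      mult_right_mono[of "norm (x t - xs)" "2 * R" "norm (Dl t)"]
    by simp
  ultimately show ?thesis
    using strongly_monotone[OF xK xs_in_K] equilibrium_ineq[OF xK] lyap_ge[OF xs_in_K, of t] by linarith
qed

lemma lyap_0_le: "lyap 0 \<le> (MF + 2 * R * LF) * norm (x 0 - xs) + 2 * R * norm (Dl 0)"
proof -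
  have x0: "x 0 \<in> K" and b0: "b 0 \<in> K" by (simp_all add: x_in_K b_in_K)
  have "lyap 0 = (x 0 - xs) \<bullet> F (x 0) + (xs - b 0) \<bullet> (F (x 0) - F xs) + (xs - b 0) \<bullet> F xs
      + (x 0 - b 0) \<bullet> Dl 0"
    unfolding lyap_eq[OF order_refl] cost_def by (simp add: inner_diff_left inner_diff_right inner_add_right)
  moreover have "(x 0 - xs) \<bullet> F (x 0) \<le> MF * norm (x 0 - xs)"
    using norm_cauchy_schwarz[of "x 0 - xs" "F (x 0)"] norm_F_le[OF x0]
      mult_left_mono[of "norm (F (x 0))" MF "norm (x 0 - xs)"]
    by (simp add: mult.commute)
  moreover have "(xs - b 0) \<bullet> (F (x 0) - F xs) \<le> 2 * R * LF * norm (x 0 - xs)"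
  proof -
    have "(xs - b 0) \<bullet> (F (x 0) - F xs) \<le> norm (xs - b 0) * norm (F (x 0) - F xs)"
      by (rule norm_cauchy_schwarz)
    also have "\<dots> \<le> (2 * R) * (LF * norm (x 0 - xs))"
      using norm_diff_le_2R[OF xs_in_K b0] norm_F_diff_le[OF x0 xs_in_K] R_pos
      by (intro mult_mono) auto
    finally show ?thesis by (simp add: mult.assoc)
  qed
  moreover have "(xs - b 0) \<bullet> F xs \<le> 0"
    using equilibrium_ineq[OF b0] by (simp add: inner_diff_left)
  moreover have "(x 0 - b 0) \<bullet> Dl 0 \<le> 2 * R * norm (Dl 0)"
    using norm_cauchy_schwarz[of "x 0 - b 0" "Dl 0"] norm_diff_le_2R[OF x0 b0]
      mult_right_mono[of "norm (x 0 - b 0)" "2 * R" "norm (Dl 0)"]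
    by simp
  ultimately show ?thesis by (simp add: algebra_simps)
qed

lemma perturbation_le_sup:
  assumes "\<tau> \<ge> 0"
  shows "perturbation \<tau> \<le> max (supnorm eps) (supnorm Dl) * (2 * R * LF + MF + max (supnorm eps) (supnorm Dl))
    + 2 * R * supnorm Dl'"
  unfolding perturbation_def
  using norm_eps_le[OF assms] norm_Dl_le[OF assms] norm_Dl'_le[OF assms] R_pos MF_nonneg LF_nonneg supnorm_nonneg
  by (intro add_mono mult_mono) auto

lemma dist_sq_le_gains:
  assumes "t \<ge> 0"
  shows "(norm (x t - xs))\<^sup>2 \<le> (transient (norm (x 0 - xs)) t)\<^sup>2
    + (gain_magnitude (max (supnorm eps) (supnorm Dl)))\<^sup>2 + (gain_rate (supnorm Dl'))\<^sup>2"
proof -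
  define \<eta>1 where "\<eta>1 = max (supnorm eps) (supnorm Dl)"
  define \<eta>2 where "\<eta>2 = supnorm Dl'"
  define r where "r = norm (x 0 - xs)"
  have "0 \<le> \<eta>1" "0 \<le> \<eta>2" "0 \<le> r"
    using supnorm_nonneg unfolding \<eta>1_def \<eta>2_def r_def by auto
  have Dl_le: "norm (Dl \<tau>) \<le> \<eta>1" if "\<tau> \<ge> 0" for \<tau>
    using norm_Dl_le[OF that] unfolding \<eta>1_def by auto
  have "lyap t \<le> exp (- t) * lyap 0 + \<eta>1 * (2 * R * LF + MF + \<eta>1) + 2 * R * \<eta>2"
    using lyap_decay[OF order_refl assms _ perturbation_le_sup] \<open>0 \<le> \<eta>1\<close> \<open>0 \<le> \<eta>2\<close> R_pos MF_nonneg LF_nonneg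
    unfolding \<eta>1_def \<eta>2_def by (simp add: add.assoc)
  moreover have "exp (- t) * lyap 0 \<le> (MF + 2 * R * LF) * exp (- t) * r + 2 * R * \<eta>1"
  proof -
    have "lyap 0 \<le> (MF + 2 * R * LF) * r + 2 * R * \<eta>1"
      using lyap_0_le Dl_le[of 0] R_pos unfolding r_def by (smt (verit) mult_left_mono)
    then have "exp (- t) * lyap 0 \<le> exp (- t) * ((MF + 2 * R * LF) * r) + exp (- t) * (2 * R * \<eta>1)"
      by (simp add: distrib_left[symmetric])
    also have "exp (- t) * (2 * R * \<eta>1) \<le> 2 * R * \<eta>1"
      using assms R_pos \<open>0 \<le> \<eta>1\<close> by (simp add: mult_left_le_one_le)
    finally show ?thesis by (simp add: algebra_simps)
  qed
  moreover have "c * (norm (x t - xs))\<^sup>2 \<le> lyap t + 2 * R * \<eta>1"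
    using dist_sq_le_lyap[OF assms] Dl_le[OF assms] R_pos by (smt (verit) mult_left_mono)
  moreover have "0 \<le> exp (- t) * r" using \<open>0 \<le> r\<close> by simp
  ultimately have "c * (norm (x t - xs))\<^sup>2 \<le> (MF + 2 * R * LF + 1) * exp (- t) * r
      + ((4 * R + 2 * R * LF + MF) * \<eta>1 + \<eta>1\<^sup>2) + 2 * R * \<eta>2"
    by (simp add: algebra_simps power2_eq_square)
  also have "\<dots> = c * ((transient r t)\<^sup>2 + (gain_magnitude \<eta>1)\<^sup>2 + (gain_rate \<eta>2)\<^sup>2)"
    unfolding transient_def gain_magnitude_def gain_rate_def
    using c_pos R_pos MF_nonneg LF_nonneg \<open>0 \<le> r\<close> \<open>0 \<le> \<eta>1\<close> \<open>0 \<le> \<eta>2\<close>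
    by (simp add: field_simps)
  finally show ?thesis
    using c_pos unfolding r_def \<eta>1_def \<eta>2_def by simp
qed

lemma ISS_bound:
  assumes "t \<ge> 0"
  shows "norm (x t - xs) \<le> transient (norm (x 0 - xs)) t
    + gain_magnitude (max (supnorm eps) (supnorm Dl)) + gain_rate (supnorm Dl')"
proof -
  have sum_sq: "a\<^sup>2 + b\<^sup>2 + d\<^sup>2 \<le> (a + b + d)\<^sup>2" if "0 \<le> a" "0 \<le> b" "0 \<le> d" for a b d :: real
    using that by (simp add: power2_eq_square algebra_simps)
  have "0 \<le> transient (norm (x 0 - xs)) t" "0 \<le> gain_magnitude (max (supnorm eps) (supnorm Dl))"
    "0 \<le> gain_rate (supnorm Dl')"
    unfolding transient_def gain_magnitude_def gain_rate_def
    using c_pos R_pos MF_nonneg LF_nonneg supnorm_nonneg by (simp_all add: le_max_iff_disj)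
  then show ?thesis
    using dist_sq_le_gains[OF assms] sum_sq power2_le_imp_le by (meson add_nonneg_nonneg order_trans)
qed

lemma lyap_tendsto_0:
  assumes "(perturbation \<longlongrightarrow> 0) at_top"
  shows "(lyap \<longlongrightarrow> 0) at_top"
proof (rule order_tendstoI)
  fix a :: real assume "a < 0"
  show "\<forall>\<^sub>F t in at_top. a < lyap t"
    using eventually_ge_at_top[of "0::real"] by eventually_elim (use lyap_nonneg \<open>a < 0\<close> in force)
next
  fix \<theta> :: real assume "0 < \<theta>"
  then have "\<forall>\<^sub>F t in at_top. perturbation t < \<theta> / 2"
    using order_tendstoD(2)[OF assms, of "\<theta> / 2"] by simp
  then obtain T where T: "\<And>t. t \<ge> T \<Longrightarrow> perturbation t < \<theta> / 2"
    unfolding eventually_at_top_linorder by blast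
  define T0 where "T0 = max T 0"
  have "((\<lambda>t. exp T0 * lyap T0 * exp (- t)) \<longlongrightarrow> exp T0 * lyap T0 * 0) at_top"
    by (intro tendsto_intros tendsto_exp_neg_at_top)
  then have "\<forall>\<^sub>F t in at_top. exp T0 * lyap T0 * exp (- t) < \<theta> / 2"
    using \<open>0 < \<theta>\<close> by (intro order_tendstoD(2)) auto
  with eventually_ge_at_top[of T0] show "\<forall>\<^sub>F t in at_top. lyap t < \<theta>"
  proof eventually_elim
    case (elim t)
    have "lyap t \<le> exp (- (t - T0)) * lyap T0 + \<theta> / 2"
      using elim(1) \<open>0 < \<theta>\<close> T unfolding T0_def by (intro lyap_decay) (auto intro: less_imp_le)
    also have "exp (- (t - T0)) * lyap T0 = exp T0 * lyap T0 * exp (- t)"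
      by (simp add: exp_diff exp_minus field_simps)
    finally show ?case using elim(2) by linarith
  qed
qed

lemma tendsto_equilibrium:
  assumes "(eps \<longlongrightarrow> 0) at_top" "(Dl \<longlongrightarrow> 0) at_top" "(Dl' \<longlongrightarrow> 0) at_top"
  shows "(x \<longlongrightarrow> xs) at_top"
proof -
  note norms = tendsto_norm_zero[OF assms(1)] tendsto_norm_zero[OF assms(2)] tendsto_norm_zero[OF assms(3)]
  have "(perturbation \<longlongrightarrow> 0 * (2 * R * LF + MF + 0) + 2 * R * 0) at_top"
    unfolding perturbation_def[abs_def] by (intro tendsto_add tendsto_mult tendsto_const norms)
  then have "((\<lambda>t. lyap t + 2 * R * norm (Dl t)) \<longlongrightarrow> 0 + 2 * R * 0) at_top"
    by (intro tendsto_add tendsto_mult tendsto_const norms lyap_tendsto_0) simp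
  moreover have "\<forall>\<^sub>F t in at_top. c * (norm (x t - xs))\<^sup>2 \<le> lyap t + 2 * R * norm (Dl t)"
    using eventually_ge_at_top[of "0::real"] by eventually_elim (rule dist_sq_le_lyap)
  moreover have "\<forall>\<^sub>F t in at_top. 0 \<le> c * (norm (x t - xs))\<^sup>2"
    using c_pos by simp
  ultimately have "((\<lambda>t. c * (norm (x t - xs))\<^sup>2) \<longlongrightarrow> 0) at_top"
    using tendsto_sandwich[OF _ _ tendsto_const] by force
  then have "((\<lambda>t. sqrt (c * (norm (x t - xs))\<^sup>2 / c)) \<longlongrightarrow> sqrt (0 / c)) at_top"
    by (intro tendsto_real_sqrt tendsto_divide tendsto_const) (use c_pos in auto)
  then have "((\<lambda>t. norm (x t - xs)) \<longlongrightarrow> 0) at_top"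
    using c_pos by simp
  then show ?thesis
    by (simp add: tendsto_norm_zero_iff LIM_zero_iff)
qed
end

context strongly_monotone_VI
begin

lemma BR_solution_trajectory:
  assumes "admissible K eps x" "bounded (Dl ` {0..})"
    and "\<forall>t\<ge>0. (Dl has_vector_derivative Dl' t) (at t within {0..})"
    and "bounded (Dl' ` {0..})" "BR_solution K F eps Dl x"
  obtains b where "br_trajectory K F F' c xs R MF LF x eps Dl Dl' b"
proof -
  obtain b where "\<And>t. t \<ge> 0 \<Longrightarrow> b t \<in> best_resp K (F (x t) + Dl t)"
    and "\<And>T. T \<ge> 0 \<Longrightarrow> (\<lambda>t. b t - x t + eps t) absolutely_integrable_on {0..T}"
    and "\<And>T. T \<ge> 0 \<Longrightarrow> ((\<lambda>t. b t - x t + eps t) has_integral x T - x 0) {0..T}"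
    using BR_solution_best_response_selection[OF assms(5) K_nonempty K_compact] by blast
  with assms show ?thesis
    by (intro that) (unfold_locales, auto simp: admissible_def)
qed

lemma ISS_estimate:
  assumes "admissible K eps x" "bounded (Dl ` {0..})"
    and "\<forall>t\<ge>0. (Dl has_vector_derivative Dl' t) (at t within {0..})"
    and "bounded (Dl' ` {0..})" "BR_solution K F eps Dl x" "t \<ge> 0"
  shows "norm (x t - xs) \<le> transient (norm (x 0 - xs)) t
    + gain_magnitude (max (supnorm eps) (supnorm Dl)) + gain_rate (supnorm Dl')"
proof -
  obtain b where "br_trajectory K F F' c xs R MF LF x eps Dl Dl' b"
    using BR_solution_trajectory[OF assms(1-5)] .
  then show ?thesis using \<open>t \<ge> 0\<close> by (rule br_trajectory.ISS_bound)
qed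

lemma BR_solution_tendsto_equilibrium:
  assumes "admissible K eps x" "bounded (Dl ` {0..})"
    and "\<forall>t\<ge>0. (Dl has_vector_derivative Dl' t) (at t within {0..})"
    and "bounded (Dl' ` {0..})" "BR_solution K F eps Dl x"
    and "(eps \<longlongrightarrow> 0) at_top" "(Dl \<longlongrightarrow> 0) at_top" "(Dl' \<longlongrightarrow> 0) at_top"
  shows "(x \<longlongrightarrow> xs) at_top"
proof -
  obtain b where "br_trajectory K F F' c xs R MF LF x eps Dl Dl' b"
    using BR_solution_trajectory[OF assms(1-5)] .
  then show ?thesis using assms(6-8) by (rule br_trajectory.tendsto_equilibrium)
qed

end

lemma strongly_monotone_VI_bounds:
  fixes K :: "'a::euclidean_space set" and F :: "'a \<Rightarrow> 'a" and F' :: "'a \<Rightarrow> ('a \<Rightarrow>\<^sub>L 'a)"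
  assumes "K \<noteq> {}" "compact K" "convex K"
    and "K \<subseteq> U" "\<And>x. x \<in> U \<Longrightarrow> (F has_derivative blinfun_apply (F' x)) (at x)" "continuous_on U F'"
    and "c > 0" "\<And>x y. x \<in> K \<Longrightarrow> y \<in> K \<Longrightarrow> (x - y) \<bullet> (F x - F y) \<ge> c * (norm (x - y))\<^sup>2"
    and "VI_sol K F xs"
  obtains R MF LF where "strongly_monotone_VI K F F' c xs R MF LF"
proof -
  obtain R where R: "R > 0" "\<forall>y\<in>K. norm y \<le> R"
    using compact_imp_bounded[OF \<open>compact K\<close>] unfolding bounded_pos by blast
  have "continuous_on K F"
    by (rule continuous_at_imp_continuous_on) (use assms(4,5) has_derivative_continuous in blast)
  then have "bounded (F ` K)"
    by (rule compact_imp_bounded[OF compact_continuous_image[OF _ \<open>compact K\<close>]])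
  then obtain MF where MF: "\<forall>y\<in>K. norm (F y) \<le> MF"
    unfolding bounded_iff by blast
  have "bounded (F' ` K)"
    using continuous_on_subset[OF assms(6,4)]
    by (rule compact_imp_bounded[OF compact_continuous_image[OF _ \<open>compact K\<close>]])
  then obtain LF where LF: "\<forall>y\<in>K. norm (F' y) \<le> LF"
    unfolding bounded_iff by blast
  have "strongly_monotone_VI K F F' c xs R MF LF"
  proof unfold_locales
    show "(F has_derivative blinfun_apply (F' y)) (at y)" if "y \<in> K" for y
      using assms(4,5) that by blast
    show "c * (norm (y - z))\<^sup>2 \<le> (y - z) \<bullet> (F y - F z)" if "y \<in> K" "z \<in> K" for y z
      using assms(8) that by blast
  qed (use assms(1-3,7,9) R MF LF in auto)
  then show ?thesis by (rule that)
qed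

theorem theorem2:
  fixes K :: "'a::euclidean_space set" and F :: "'a \<Rightarrow> 'a" and F' :: "'a \<Rightarrow> ('a \<Rightarrow>\<^sub>L 'a)"
    and c :: real and xs :: 'a
  assumes "K \<noteq> {}" and "compact K" and "convex K"
    and "open U" and "K \<subseteq> U" and "\<And>x. x \<in> U \<Longrightarrow> (F has_derivative blinfun_apply (F' x)) (at x)"
    and "continuous_on U F'"
    and "c > 0" and "\<And>x y. x \<in> K \<Longrightarrow> y \<in> K \<Longrightarrow> (x - y) \<bullet> (F x - F y) \<ge> c * (norm (x - y))\<^sup>2"
    and "VI_sol K F xs"
  shows "(\<exists>w g1 g2. classKL w \<and> classK g1 \<and> classK g2 \<and>
           (\<forall>x eps Dl Dl'.
              admissible K eps x \<and> x 0 \<in> K \<and>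
              bounded (Dl ` {0..}) \<and>
              (\<forall>t\<ge>0. (Dl has_vector_derivative Dl' t) (at t within {0..})) \<and>
              bounded (Dl' ` {0..}) \<and>
              BR_solution K F eps Dl x \<longrightarrow>
              (\<forall>t\<ge>0. norm (x t - xs) \<le> w (norm (x 0 - xs)) t
                       + g1 (max (supnorm eps) (supnorm Dl)) + g2 (supnorm Dl'))))
       \<and> (\<forall>x eps Dl Dl'.
              admissible K eps x \<and> x 0 \<in> K \<and>
              bounded (Dl ` {0..}) \<and>
              (\<forall>t\<ge>0. (Dl has_vector_derivative Dl' t) (at t within {0..})) \<and>
              bounded (Dl' ` {0..}) \<and>
              BR_solution K F eps Dl x \<and>
              (eps \<longlongrightarrow> 0) at_top \<and> (Dl \<longlongrightarrow> 0) at_top \<and> (Dl' \<longlongrightarrow> 0) at_top \<longrightarrow>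
              (x \<longlongrightarrow> xs) at_top)"
proof -
  obtain R MF LF where "strongly_monotone_VI K F F' c xs R MF LF"
    using strongly_monotone_VI_bounds[OF assms(1-3,5-10)] .
  then interpret strongly_monotone_VI K F F' c xs R MF LF .
  show ?thesis
    using ISS_estimate BR_solution_tendsto_equilibrium
      classKL_transient classK_gain_magnitude classK_gain_rate by blast
qed

end
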